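(* Let $\rho$ be a two-qubit state whose two reduced states are both maximally mixed, i.e. $\mathrm{Tr}[\rho(\sigma_i\otimes\mathbb{1})]=\mathrm{Tr}[\rho(\mathbb{1}\otimes\sigma_i)]=0$ for $i=1,2,3$, and let $T$ be its correlation matrix $T_{ij}=\mathrm{Tr}[\rho(\sigma_i\otimes\sigma_j)]$, brought by local unitary operations to the diagonal form $T=\mathrm{diag}(t_1,t_2,t_3)$. Then $$G(\rho)=\tfrac14\big[t_1^2+t_2^2+t_3^2-\max\{t_1^2,t_2^2,t_3^2\}\big],$$ and $G(\rho)=G^{\to}(\rho)=G^{\leftarrow}(\rho)$.
   Context: $\sigma_i$ are the Pauli matrices. The Hilbert–Schmidt distance is $D(M,N)=\sqrt{\mathrm{Tr}[(M-N)(M-N)^\dagger]}$. For unit vectors $\vec{k},\vec{\ell}\in\mathbb{R}^3$ let $\Pi^A_\pm=\frac12(\mathbb{1}\pm\vec{k}\cdot\vec{\sigma})$, $\Pi^B_\pm=\frac12(\mathbb{1}\pm\vec{\ell}\cdot\vec{\sigma})$. Define $\chi_{\vec{k},\vec{\ell}}=\sum_{i,j=\pm}(\Pi^A_i\otimes\Pi^B_j)\rho(\Pi^A_i\otimes\Pi^B_j)$, $\rho^{\to}_{\vec{k}}=\sum_{i=\pm}(\Pi^A_i\otimes\mathbb{1})\rho(\Pi^A_i\otimes\mathbb{1})$, $\rho^{\leftarrow}_{\vec{\ell}}=\sum_{j=\pm}(\mathbb{1}\otimes\Pi^B_j)\rho(\mathbb{1}\otimes\Pi^B_j)$. Then $G(\rho)=\min_{\vec{k},\vec{\ell}}D^2(\rho,\chi_{\vec{k},\vec{\ell}})$,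 $G^{\to}(\rho)=\min_{\vec{k}}D^2(\rho,\rho^{\to}_{\vec{k}})$, $G^{\leftarrow}(\rho)=\min_{\vec{\ell}}D^2(\rho,\rho^{\leftarrow}_{\vec{\ell}})$, minima over unit vectors. (All these quantities are invariant under local unitaries.) *)

theory Defs
  imports Complex_Main "Jordan_Normal_Form.Matrix"
begin

definition mtrace :: "complex mat \<Rightarrow> complex" where
  "mtrace A = (\<Sum>i<dim_row A. A $$ (i, i))"

definition dagger :: "complex mat \<Rightarrow> complex mat" where
  "dagger A = mat (dim_col A) (dim_row A) (\<lambda>(i, j). cnj (A $$ (j, i)))"

definition kron :: "complex mat \<Rightarrow> complex mat \<Rightarrow> complex mat" where
  "kron A B = mat (dim_row A * dim_row B) (dim_col A * dim_col B)
     (\<lambda>(i, j). A $$ (i div dim_row B, j div dim_col B) * B $$ (i mod dim_row B, j mod dim_col B))"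

definition pauli :: "nat \<Rightarrow> complex mat" where
  "pauli n = (if n = 1 then mat_of_rows_list 2 [[0, 1], [1, 0]]
              else if n = 2 then mat_of_rows_list 2 [[0, -\<i>], [\<i>, 0]]
              else if n = 3 then mat_of_rows_list 2 [[1, 0], [0, -1]]
              else 1\<^sub>m 2)"

definition density4 :: "complex mat \<Rightarrow> bool" where
  "density4 \<rho> \<longleftrightarrow> \<rho> \<in> carrier_mat 4 4 \<and> dagger \<rho> = \<rho> \<and>
     (\<forall>v \<in> carrier_vec 4. 0 \<le> Re (map_vec cnj v \<bullet> (\<rho> *\<^sub>v v))) \<and> mtrace \<rho> = 1"

definition unitary2 :: "complex mat \<Rightarrow> bool" where
  "unitary2 U \<longleftrightarrow> U \<in> carrier_mat 2 2 \<and> U * dagger U = 1\<^sub>m 2"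

definition HS_dist :: "complex mat \<Rightarrow> complex mat \<Rightarrow> real" where
  "HS_dist M N = sqrt (Re (mtrace ((M - N) * dagger (M - N))))"

definition unit3 :: "(nat \<Rightarrow> real) \<Rightarrow> bool" where
  "unit3 k \<longleftrightarrow> (k 1)\<^sup>2 + (k 2)\<^sup>2 + (k 3)\<^sup>2 = 1"

definition dot_sigma :: "(nat \<Rightarrow> real) \<Rightarrow> complex mat" where
  "dot_sigma k = complex_of_real (k 1) \<cdot>\<^sub>m pauli 1 + complex_of_real (k 2) \<cdot>\<^sub>m pauli 2
                 + complex_of_real (k 3) \<cdot>\<^sub>m pauli 3"

definition proj :: "real \<Rightarrow> (nat \<Rightarrow> real) \<Rightarrow> complex mat" where
  "proj s k = (1/2 :: complex) \<cdot>\<^sub>m (1\<^sub>m 2 + complex_of_real s \<cdot>\<^sub>m dot_sigma k)"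

definition sandwich :: "complex mat \<Rightarrow> complex mat \<Rightarrow> complex mat" where
  "sandwich P \<rho> = P * \<rho> * P"

definition chi :: "complex mat \<Rightarrow> (nat \<Rightarrow> real) \<Rightarrow> (nat \<Rightarrow> real) \<Rightarrow> complex mat" where
  "chi \<rho> k l =
      sandwich (kron (proj 1 k) (proj 1 l)) \<rho> + sandwich (kron (proj 1 k) (proj (-1) l)) \<rho>
    + sandwich (kron (proj (-1) k) (proj 1 l)) \<rho> + sandwich (kron (proj (-1) k) (proj (-1) l)) \<rho>"

definition rho_right :: "complex mat \<Rightarrow> (nat \<Rightarrow> real) \<Rightarrow> complex mat" where
  "rho_right \<rho> k = sandwich (kron (proj 1 k) (1\<^sub>m 2)) \<rho> + sandwich (kron (proj (-1) k) (1\<^sub>m 2)) \<rho>"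

definition rho_left :: "complex mat \<Rightarrow> (nat \<Rightarrow> real) \<Rightarrow> complex mat" where
  "rho_left \<rho> l = sandwich (kron (1\<^sub>m 2) (proj 1 l)) \<rho> + sandwich (kron (1\<^sub>m 2) (proj (-1) l)) \<rho>"

definition G :: "complex mat \<Rightarrow> real" where
  "G \<rho> = Inf {(HS_dist \<rho> (chi \<rho> k l))\<^sup>2 | k l. unit3 k \<and> unit3 l}"

definition G_right :: "complex mat \<Rightarrow> real" where
  "G_right \<rho> = Inf {(HS_dist \<rho> (rho_right \<rho> k))\<^sup>2 | k. unit3 k}"

definition G_left :: "complex mat \<Rightarrow> real" where
  "G_left \<rho> = Inf {(HS_dist \<rho> (rho_left \<rho> l))\<^sup>2 | l. unit3 l}"

definition corr :: "complex mat \<Rightarrow> nat \<Rightarrow> nat \<Rightarrow> complex" where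
  "corr \<rho> i j = mtrace (\<rho> * kron (pauli i) (pauli j))"

end

theory Submission
  imports Defs "Jordan_Normal_Form.Determinant"
begin

text \<open>
  Expand \<open>\<rho> = 1/4 \<Sum>\<^sub>a\<^sub>b T\<^sub>a\<^sub>b \<sigma>\<^sub>a \<otimes> \<sigma>\<^sub>b\<close> over \<open>a, b = 0..3\<close> with \<open>\<sigma>\<^sub>0 = 1\<close>: maximally mixed
  marginals leave only \<open>T\<^sub>0\<^sub>0 = 1\<close> and the \<open>3 \<times> 3\<close> correlation block \<open>T\<close>. In these coordinates
  the Hilbert-Schmidt distance is Euclidean, and measuring along \<open>k\<close> on one side replaces the
  corresponding index of \<open>T\<close> by its projection onto \<open>k\<close>. Hence, for unit \<open>k\<close> and \<open>l\<close>,
  \<open>4 D\<^sup>2(\<rho>, \<chi>) = |T|\<^sup>2 - (k\<^sup>t T l)\<^sup>2\<close>, \<open>4 D\<^sup>2(\<rho>, \<rho>\<^sup>\<rightarrow>) = |T|\<^sup>2 - |T\<^sup>t k|\<^sup>2\<close> and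
  \<open>4 D\<^sup>2(\<rho>, \<rho>\<^sup>\<leftarrow>) = |T|\<^sup>2 - |T l|\<^sup>2\<close>. Local unitaries act on \<open>T\<close> by rotations, so
  \<open>T = O\<^sub>U\<^sup>t diag(t) O\<^sub>V\<close>; then \<open>|T|\<^sup>2 = \<Sum> t\<^sub>i\<^sup>2\<close>, each of the three subtracted quantities is at
  most \<open>max t\<^sub>i\<^sup>2\<close>, and the maximum is attained by taking \<open>k\<close> and \<open>l\<close> to be the rows of
  \<open>O\<^sub>U\<close> and \<open>O\<^sub>V\<close> belonging to the largest \<open>t\<^sub>i\<^sup>2\<close>.
\<close>

lemma sum_atLeast0LessThan_four: "(\<Sum>i\<in>{0..<4::nat}. f i) = f 0 + f 1 + f 2 + f 3"
  by (simp add: numeral_eq_Suc atLeast0LessThan lessThan_Suc ac_simps)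

lemma sum_atLeast0LessThan_two: "(\<Sum>i\<in>{0..<2::nat}. f i) = f 0 + f 1"
  by (simp add: numeral_eq_Suc atLeast0LessThan lessThan_Suc ac_simps)

lemma sum_lessThan_four: "(\<Sum>i<4::nat. f i) = f 0 + f 1 + f 2 + f 3"
  by (simp add: numeral_eq_Suc lessThan_Suc ac_simps)

lemma sum_lessThan_two: "(\<Sum>i<2::nat. f i) = f 0 + f 1"
  by (simp add: numeral_eq_Suc lessThan_Suc ac_simps)

lemma sum_lessThan_four_off_axes:
  "(\<Sum>a<4::nat. \<Sum>b<4::nat. (if a = 0 \<or> b = 0 then 0 else f a b))
     = (\<Sum>i\<in>{1,2,3::nat}. \<Sum>j\<in>{1,2,3::nat}. f i j)"
  by (simp add: sum_lessThan_four ac_simps)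

lemma less_four_cases:
  "(i::nat) < 4 \<Longrightarrow> (i = 0 \<Longrightarrow> P) \<Longrightarrow> (i = 1 \<Longrightarrow> P) \<Longrightarrow> (i = 2 \<Longrightarrow> P) \<Longrightarrow> (i = 3 \<Longrightarrow> P) \<Longrightarrow> P"
  by linarith

lemma less_two_cases: "(i::nat) < 2 \<Longrightarrow> (i = 0 \<Longrightarrow> P) \<Longrightarrow> (i = 1 \<Longrightarrow> P) \<Longrightarrow> P"
  by linarith

lemma kron_index:
  "i < dim_row A * dim_row B \<Longrightarrow> j < dim_col A * dim_col B \<Longrightarrow>
   kron A B $$ (i,j) = A $$ (i div dim_row B, j div dim_col B) * B $$ (i mod dim_row B, j mod dim_col B)"
  by (simp add: kron_def)

lemma kron_dim [simp]:
  "dim_row (kron A B) = dim_row A * dim_row B" "dim_col (kron A B) = dim_col A * dim_col B"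
  by (simp_all add: kron_def)

lemma kron_carrier_mat_2:
  "A \<in> carrier_mat 2 2 \<Longrightarrow> B \<in> carrier_mat 2 2 \<Longrightarrow> kron A B \<in> carrier_mat 4 4"
  by (auto simp: kron_def)

lemma pauli_carrier [simp]: "pauli n \<in> carrier_mat 2 2"
  by (simp add: pauli_def mat_of_rows_list_def numeral_eq_Suc)

lemma pauli_dim [simp]: "dim_row (pauli n) = 2" "dim_col (pauli n) = 2"
  using pauli_carrier[of n] by (auto simp del: pauli_carrier)

lemma pauli_zero: "pauli 0 = 1\<^sub>m 2"
  by (simp add: pauli_def)

lemma pauli_entries:
  "pauli 0 $$ (0,0) = 1" "pauli 0 $$ (0,1) = 0" "pauli 0 $$ (1,0) = 0" "pauli 0 $$ (1,1) = 1"
  "pauli 1 $$ (0,0) = 0" "pauli 1 $$ (0,1) = 1" "pauli 1 $$ (1,0) = 1" "pauli 1 $$ (1,1) = 0"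
  "pauli 2 $$ (0,0) = 0" "pauli 2 $$ (0,1) = -\<i>" "pauli 2 $$ (1,0) = \<i>" "pauli 2 $$ (1,1) = 0"
  "pauli 3 $$ (0,0) = 1" "pauli 3 $$ (0,1) = 0" "pauli 3 $$ (1,0) = 0" "pauli 3 $$ (1,1) = -1"
  by (simp_all add: pauli_def mat_of_rows_list_def)

lemmas pauli_entries' = pauli_entries[unfolded One_nat_def]

lemma dagger_index: "i < dim_col A \<Longrightarrow> j < dim_row A \<Longrightarrow> dagger A $$ (i,j) = cnj (A $$ (j,i))"
  by (simp add: dagger_def)

lemma dagger_dim [simp]: "dim_row (dagger A) = dim_col A" "dim_col (dagger A) = dim_row A"
  by (simp_all add: dagger_def)

lemma dagger_carrier_mat: "A \<in> carrier_mat n m \<Longrightarrow> dagger A \<in> carrier_mat m n"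
  by (auto simp: dagger_def)

lemma dagger_dagger: "dagger (dagger A) = A"
  by (rule eq_matI) (auto simp: dagger_index)

lemma index_mult_sum:
  "i < dim_row A \<Longrightarrow> j < dim_col B \<Longrightarrow> dim_col A = dim_row B \<Longrightarrow>
   (A * B) $$ (i,j) = (\<Sum>k<dim_col A. A $$ (i,k) * B $$ (k,j))"
  by (simp add: scalar_prod_def atLeast0LessThan)

lemma dagger_mult:
  assumes A: "A \<in> carrier_mat n m" and B: "B \<in> carrier_mat m p"
  shows "dagger (A * B) = dagger B * dagger A"
proof (rule eq_matI)
  fix i j assume "i < dim_row (dagger B * dagger A)" "j < dim_col (dagger B * dagger A)"
  then have i: "i < p" and j: "j < n" using A B by auto
  have "(A * B) $$ (j,i) = (\<Sum>k<m. A $$ (j,k) * B $$ (k,i))"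
    using A B i j by (subst index_mult_sum) auto
  then have "dagger (A * B) $$ (i,j) = (\<Sum>k<m. dagger B $$ (i,k) * dagger A $$ (k,j))"
    using A B i j by (simp add: dagger_index cnj_sum mult.commute)
  also have "\<dots> = (dagger B * dagger A) $$ (i,j)"
    using A B i j by (simp add: scalar_prod_def atLeast0LessThan)
  finally show "dagger (A * B) $$ (i,j) = (dagger B * dagger A) $$ (i,j)" .
qed (use A B in auto)

lemma dagger_hermitian_entry:
  assumes "H \<in> carrier_mat n n" "dagger H = H" "i < n" "j < n"
  shows "H $$ (j,i) = cnj (H $$ (i,j))"
  using assms dagger_index[of j H i] by simp

lemma unitary_dagger:
  assumes U: "U \<in> carrier_mat 2 2" and u: "U * dagger U = 1\<^sub>m 2"
  shows "dagger U * dagger (dagger U) = 1\<^sub>m 2"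
  unfolding dagger_dagger by (rule mat_mult_left_right_inverse[OF U dagger_carrier_mat[OF U] u])

lemma mtrace_mult:
  "A \<in> carrier_mat n m \<Longrightarrow> B \<in> carrier_mat m n \<Longrightarrow>
   mtrace (A * B) = (\<Sum>i<n. \<Sum>k<m. A $$ (i,k) * B $$ (k,i))"
  unfolding mtrace_def by (intro sum.cong) (simp, subst index_mult_sum, auto)

lemma mtrace_mult_commute:
  "A \<in> carrier_mat n m \<Longrightarrow> B \<in> carrier_mat m n \<Longrightarrow> mtrace (A * B) = mtrace (B * A)"
  by (simp add: mtrace_mult sum.swap[of _ "{..<n}"] mult.commute)

lemma mtrace_add:
  "A \<in> carrier_mat n n \<Longrightarrow> B \<in> carrier_mat n n \<Longrightarrow> mtrace (A + B) = mtrace A + mtrace B"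
  by (simp add: mtrace_def sum.distrib)

lemmas mult_assoc_2 = assoc_mult_mat[of _ 2 2 _ 2 _ 2]
lemmas mult_carrier_mat_2 = mult_carrier_mat[of _ 2 2 _ 2]
lemmas mult_assoc_4 = assoc_mult_mat[of _ 4 4 _ 4 _ 4]
lemmas mult_carrier_mat_4 = mult_carrier_mat[of _ 4 4 _ 4]

lemma kron_mult:
  assumes "A \<in> carrier_mat 2 2" "B \<in> carrier_mat 2 2" "C \<in> carrier_mat 2 2" "D \<in> carrier_mat 2 2"
  shows "kron A B * kron C D = kron (A * C) (B * D)"
proof (rule eq_matI)
  fix i j assume "i < dim_row (kron (A * C) (B * D))" "j < dim_col (kron (A * C) (B * D))"
  then have "i < 4" "j < 4" using assms by auto
  then show "(kron A B * kron C D) $$ (i, j) = kron (A * C) (B * D) $$ (i, j)"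
    using assms
    by (elim less_four_cases[of i] less_four_cases[of j];
        simp add: kron_index scalar_prod_def sum_atLeast0LessThan_four sum_atLeast0LessThan_two;
        simp add: ring_distribs)
qed (use assms in auto)

lemma dagger_kron:
  assumes A: "A \<in> carrier_mat 2 2" and B: "B \<in> carrier_mat 2 2"
  shows "dagger (kron A B) = kron (dagger A) (dagger B)"
proof (rule eq_matI)
  fix i j assume "i < dim_row (kron (dagger A) (dagger B))" "j < dim_col (kron (dagger A) (dagger B))"
  then have "i < 4" "j < 4" using A B by auto
  then show "dagger (kron A B) $$ (i,j) = kron (dagger A) (dagger B) $$ (i,j)"
    using A B by (elim less_four_cases[of i] less_four_cases[of j]; simp add: dagger_index kron_index)
qed (use A B in auto)

lemma kron_one_2: "kron (1\<^sub>m 2) (1\<^sub>m 2) = 1\<^sub>m 4"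
  by (rule eq_matI) (auto simp: kron_index elim!: less_four_cases)

lemma dagger_pauli:
  assumes "n < 4"
  shows "dagger (pauli n) = pauli n"
proof (rule eq_matI)
  fix i j assume "i < dim_row (pauli n)" "j < dim_col (pauli n)"
  then show "dagger (pauli n) $$ (i,j) = pauli n $$ (i,j)"
    using assms
    by (auto simp: dagger_index elim!: less_two_cases)
       (elim less_four_cases; simp add: pauli_entries pauli_entries')+
qed auto

lemma mtrace_pauli: "n < 4 \<Longrightarrow> mtrace (pauli n) = (if n = 0 then 2 else 0)"
  by (elim less_four_cases; simp add: mtrace_def sum_lessThan_two pauli_entries pauli_entries')

lemma mtrace_pauli_mult:
  "n < 4 \<Longrightarrow> m < 4 \<Longrightarrow> mtrace (pauli n * pauli m) = (if n = m then 2 else 0)"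
  by (simp add: mtrace_mult[of _ 2 2])
     (elim less_four_cases[of n] less_four_cases[of m];
      simp add: sum_lessThan_two pauli_entries pauli_entries')

lemma sandwich_carrier_mat:
  "P \<in> carrier_mat n n \<Longrightarrow> A \<in> carrier_mat n n \<Longrightarrow> sandwich P A \<in> carrier_mat n n"
  unfolding sandwich_def by auto

lemma sandwich_index_2:
  "P \<in> carrier_mat 2 2 \<Longrightarrow> A \<in> carrier_mat 2 2 \<Longrightarrow> i < 2 \<Longrightarrow> j < 2 \<Longrightarrow>
   sandwich P A $$ (i,j) = (\<Sum>y<2. \<Sum>x<2. P $$ (i,x) * A $$ (x,y) * P $$ (y,j))"
  unfolding sandwich_def
  by (simp add: scalar_prod_def sum_atLeast0LessThan_two sum_lessThan_two algebra_simps)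

lemma sandwich_kron:
  assumes "P \<in> carrier_mat 2 2" "Q \<in> carrier_mat 2 2" "A \<in> carrier_mat 2 2" "B \<in> carrier_mat 2 2"
  shows "sandwich (kron P Q) (kron A B) = kron (sandwich P A) (sandwich Q B)"
  using assms by (simp add: sandwich_def kron_mult)

lemma mtrace_sandwich_mult:
  assumes W: "W \<in> carrier_mat n n" and R: "R \<in> carrier_mat n n" and Z: "Z \<in> carrier_mat n n"
  shows "mtrace (sandwich W R * Z) = mtrace (R * sandwich W Z)"
proof -
  have RWZ: "R * W * Z \<in> carrier_mat n n" using assms by auto
  have "sandwich W R * Z = W * (R * W * Z)"
    unfolding sandwich_def using assms by (simp add: assoc_mult_mat[of W n n "R * W" n Z n])
  also have "mtrace \<dots> = mtrace ((R * W * Z) * W)"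
    by (rule mtrace_mult_commute[OF W RWZ])
  also have "(R * W * Z) * W = R * sandwich W Z"
    unfolding sandwich_def using assms by (simp add: assoc_mult_mat[of R n n "W * Z" n W n])
  finally show ?thesis .
qed

lemma proj_carrier [simp]: "proj s k \<in> carrier_mat 2 2"
  by (simp add: proj_def dot_sigma_def)

lemma proj_dim [simp]: "dim_row (proj s k) = 2" "dim_col (proj s k) = 2"
  using proj_carrier[of s k] by (auto simp del: proj_carrier)

lemma proj_entries:
  "proj s k $$ (0,0) = (1 + complex_of_real s * complex_of_real (k 3)) / 2"
  "proj s k $$ (0,1) = complex_of_real s * (complex_of_real (k 1) - \<i> * complex_of_real (k 2)) / 2"
  "proj s k $$ (1,0) = complex_of_real s * (complex_of_real (k 1) + \<i> * complex_of_real (k 2)) / 2"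
  "proj s k $$ (1,1) = (1 - complex_of_real s * complex_of_real (k 3)) / 2"
  by (simp_all add: proj_def dot_sigma_def pauli_entries pauli_entries' algebra_simps)

lemmas proj_entries' = proj_entries[unfolded One_nat_def]

lemma chi_carrier_mat: "R \<in> carrier_mat 4 4 \<Longrightarrow> chi R k l \<in> carrier_mat 4 4"
  unfolding chi_def by (intro add_carrier_mat sandwich_carrier_mat kron_carrier_mat_2 proj_carrier)

lemma rho_right_carrier_mat: "R \<in> carrier_mat 4 4 \<Longrightarrow> rho_right R k \<in> carrier_mat 4 4"
  unfolding rho_right_def
  by (intro add_carrier_mat sandwich_carrier_mat kron_carrier_mat_2 proj_carrier one_carrier_mat)

lemma rho_left_carrier_mat: "R \<in> carrier_mat 4 4 \<Longrightarrow> rho_left R k \<in> carrier_mat 4 4"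
  unfolding rho_left_def
  by (intro add_carrier_mat sandwich_carrier_mat kron_carrier_mat_2 proj_carrier one_carrier_mat)

section \<open>Pauli coordinates\<close>

abbreviation pauli_coord :: "nat \<Rightarrow> complex mat \<Rightarrow> complex" where
  "pauli_coord a A \<equiv> mtrace (pauli a * A)"

abbreviation pauli2 :: "nat \<Rightarrow> nat \<Rightarrow> complex mat" where
  "pauli2 a b \<equiv> kron (pauli a) (pauli b)"

text \<open>
  With \<open>\<sigma>\<^sub>0 = 1\<close>, the values \<open>corr R a b\<close> for \<open>a, b = 0..3\<close> are the Pauli coordinates of a
  \<open>4 \<times> 4\<close> matrix: \<open>R = 1/4 \<Sum>\<^sub>a\<^sub>b corr R a b \<sigma>\<^sub>a \<otimes> \<sigma>\<^sub>b\<close>.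
\<close>

lemma pauli2_carrier_mat: "pauli2 a b \<in> carrier_mat 4 4"
  by (simp add: kron_carrier_mat_2)

lemma pauli_coord_eq_sum:
  "A \<in> carrier_mat 2 2 \<Longrightarrow> pauli_coord a A = (\<Sum>i<2. \<Sum>j<2. pauli a $$ (i,j) * A $$ (j,i))"
  by (simp add: mtrace_mult[of _ 2 2])

lemma corr_eq_sum:
  "R \<in> carrier_mat 4 4 \<Longrightarrow> corr R a b = (\<Sum>k<4. \<Sum>l<4. R $$ (k,l) * pauli2 a b $$ (l,k))"
  by (simp add: corr_def mtrace_mult[OF _ pauli2_carrier_mat])

lemma pauli2_expansion_entry:
  fixes x :: "nat \<Rightarrow> nat \<Rightarrow> complex"
  assumes "i < 4" "j < 4"
  shows "4 * x i j = (\<Sum>a<4. \<Sum>b<4. (\<Sum>k<4. \<Sum>l<4. x k l * pauli2 a b $$ (l,k)) * pauli2 a b $$ (i,j))"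
  using assms
  by (elim less_four_cases[of i] less_four_cases[of j];
      simp add: sum_lessThan_four kron_index pauli_entries pauli_entries'; simp add: ring_distribs)

lemma pauli2_orthogonal:
  assumes "a < 4" "b < 4" "c < 4" "d < 4"
  shows "(\<Sum>i<4. \<Sum>j<4. pauli2 a b $$ (i,j) * cnj (pauli2 c d $$ (i,j))) = (if a = c \<and> b = d then 4 else 0)"
  using assms
  by (elim less_four_cases[of a] less_four_cases[of b] less_four_cases[of c] less_four_cases[of d];
      simp add: sum_lessThan_four kron_index pauli_entries pauli_entries')

lemma sum_mult_sum_swap:
  fixes f g :: "'x \<Rightarrow> 'i \<Rightarrow> 'j \<Rightarrow> 'a::comm_semiring_0"
  shows "(\<Sum>i\<in>I. \<Sum>j\<in>J. (\<Sum>p\<in>P. f p i j) * (\<Sum>q\<in>P. g q i j))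
       = (\<Sum>p\<in>P. \<Sum>q\<in>P. \<Sum>i\<in>I. \<Sum>j\<in>J. f p i j * g q i j)"
proof -
  have "(\<Sum>i\<in>I. \<Sum>j\<in>J. (\<Sum>p\<in>P. f p i j) * (\<Sum>q\<in>P. g q i j))
      = (\<Sum>i\<in>I. \<Sum>j\<in>J. \<Sum>p\<in>P. \<Sum>q\<in>P. f p i j * g q i j)"
    by (simp add: sum_product)
  also have "\<dots> = (\<Sum>i\<in>I. \<Sum>p\<in>P. \<Sum>j\<in>J. \<Sum>q\<in>P. f p i j * g q i j)"
    by (intro sum.cong refl) (rule sum.swap)
  also have "\<dots> = (\<Sum>p\<in>P. \<Sum>i\<in>I. \<Sum>j\<in>J. \<Sum>q\<in>P. f p i j * g q i j)"
    by (rule sum.swap)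
  also have "\<dots> = (\<Sum>p\<in>P. \<Sum>i\<in>I. \<Sum>q\<in>P. \<Sum>j\<in>J. f p i j * g q i j)"
    by (intro sum.cong refl) (rule sum.swap)
  also have "\<dots> = (\<Sum>p\<in>P. \<Sum>q\<in>P. \<Sum>i\<in>I. \<Sum>j\<in>J. f p i j * g q i j)"
    by (intro sum.cong refl) (rule sum.swap)
  finally show ?thesis .
qed

lemma mtrace_mult_dagger_corr:
  assumes Y: "Y \<in> carrier_mat 4 4"
  shows "4 * mtrace (Y * dagger Y) = (\<Sum>a<4. \<Sum>b<4. corr Y a b * cnj (corr Y a b))"
proof -
  define P where "P = {..<4::nat} \<times> {..<4::nat}"
  define c where "c p = corr Y (fst p) (snd p)" for p
  define S where "S p i j = pauli2 (fst p) (snd p) $$ (i,j)" for p i j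
  have sum_P: "(\<Sum>p\<in>P. f (fst p) (snd p)) = (\<Sum>a<4. \<Sum>b<4. f a b)" for f :: "nat \<Rightarrow> nat \<Rightarrow> complex"
    by (simp add: P_def sum.cartesian_product split_beta)
  have expansion: "4 * Y $$ (i,j) = (\<Sum>p\<in>P. c p * S p i j)" if "i < 4" "j < 4" for i j
  proof -
    have "(\<Sum>p\<in>P. c p * S p i j) = (\<Sum>a<4. \<Sum>b<4. corr Y a b * pauli2 a b $$ (i,j))"
      unfolding c_def S_def by (rule sum_P)
    also have "\<dots> = 4 * Y $$ (i,j)"
      using pauli2_expansion_entry[OF that, of "\<lambda>k l. Y $$ (k,l)"] by (simp add: corr_eq_sum[OF Y])
    finally show ?thesis by simp
  qed
  have "16 * mtrace (Y * dagger Y) = (\<Sum>i<4. \<Sum>j<4. (4 * Y $$ (i,j)) * cnj (4 * Y $$ (i,j)))"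
    using Y by (simp add: mtrace_mult[OF Y dagger_carrier_mat[OF Y]] dagger_index sum_distrib_left mult_ac)
  also have "\<dots> = (\<Sum>i<4. \<Sum>j<4. (\<Sum>p\<in>P. c p * S p i j) * (\<Sum>q\<in>P. cnj (c q) * cnj (S q i j)))"
    by (intro sum.cong refl) (simp add: expansion)
  also have "\<dots> = (\<Sum>p\<in>P. \<Sum>q\<in>P. \<Sum>i<4. \<Sum>j<4. (c p * S p i j) * (cnj (c q) * cnj (S q i j)))"
    by (rule sum_mult_sum_swap)
  also have "\<dots> = (\<Sum>p\<in>P. \<Sum>q\<in>P. c p * cnj (c q) * (\<Sum>i<4. \<Sum>j<4. S p i j * cnj (S q i j)))"
    by (simp add: sum_distrib_left mult_ac)
  also have "\<dots> = (\<Sum>p\<in>P. \<Sum>q\<in>P. if p = q then 4 * (c p * cnj (c q)) else 0)"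
    by (intro sum.cong refl) (auto simp: S_def P_def prod_eq_iff pauli2_orthogonal)
  also have "\<dots> = (\<Sum>p\<in>P. 4 * (c p * cnj (c p)))"
    by (intro sum.cong refl) (simp add: P_def)
  also have "\<dots> = 4 * (\<Sum>a<4. \<Sum>b<4. corr Y a b * cnj (corr Y a b))"
    unfolding c_def sum_P[where f="\<lambda>a b. 4 * (corr Y a b * cnj (corr Y a b))"]
    by (simp add: sum_distrib_left)
  finally show ?thesis by simp
qed

lemma mtrace_mult_pauli_coord:
  assumes "H \<in> carrier_mat 2 2" "K \<in> carrier_mat 2 2"
  shows "2 * mtrace (H * K) = (\<Sum>a<4. pauli_coord a H * pauli_coord a K)"
  using assms
  by (simp add: pauli_coord_eq_sum mtrace_mult[of _ 2 2])
     (simp add: sum_lessThan_two sum_lessThan_four pauli_entries pauli_entries', simp add: algebra_simps)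

lemma mtrace_kron_corr_expansion:
  assumes R: "R \<in> carrier_mat 4 4" and A: "A \<in> carrier_mat 2 2" and B: "B \<in> carrier_mat 2 2"
  shows "4 * mtrace (R * kron A B) = (\<Sum>a<4. \<Sum>b<4. pauli_coord a A * pauli_coord b B * corr R a b)"
  using R A B
  by (simp add: pauli_coord_eq_sum corr_eq_sum mtrace_mult[OF R kron_carrier_mat_2[OF A B]])
     (simp add: sum_lessThan_two sum_lessThan_four pauli_entries pauli_entries' kron_index,
      simp add: algebra_simps)

lemma pauli_coord_hermitian_real:
  assumes H: "H \<in> carrier_mat 2 2" and h: "dagger H = H" and a: "a < 4"
  shows "cnj (pauli_coord a H) = pauli_coord a H"
proof -
  have "H $$ (1,0) = cnj (H $$ (0,1))" "cnj (H $$ (0,0)) = H $$ (0,0)" "cnj (H $$ (1,1)) = H $$ (1,1)"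
    using dagger_hermitian_entry[OF H h, of 0 1] dagger_hermitian_entry[OF H h, of 0 0]
      dagger_hermitian_entry[OF H h, of 1 1] by simp_all
  note entries = this this[unfolded One_nat_def]
  show ?thesis
    using a H
    by (simp add: pauli_coord_eq_sum)
       (elim less_four_cases[of a]; simp add: sum_lessThan_two pauli_entries pauli_entries' entries)
qed

lemma corr_hermitian_real:
  assumes R: "R \<in> carrier_mat 4 4" and h: "dagger R = R" and "a < 4" "b < 4"
  shows "cnj (corr R a b) = corr R a b"
proof -
  have off: "R $$ (j,i) = cnj (R $$ (i,j))" if "i < 4" "j < 4" for i j
    using dagger_hermitian_entry[OF R h that] .
  have diag: "cnj (R $$ (i,i)) = R $$ (i,i)" if "i < 4" for i
    using dagger_hermitian_entry[OF R h that that] by simp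
  note entries = off[of 0 1] off[of 0 2] off[of 0 3] off[of 1 2] off[of 1 3] off[of 2 3]
    diag[of 0] diag[of 1] diag[of 2] diag[of 3]
  show ?thesis
    using assms(3,4)
    by (simp add: corr_eq_sum[OF R])
       (elim less_four_cases[of a] less_four_cases[of b];
        simp add: sum_lessThan_four kron_index pauli_entries pauli_entries' entries entries[unfolded One_nat_def])
qed

lemma of_real_Re_eq_if_cnj_eq: "cnj z = z \<Longrightarrow> complex_of_real (Re z) = z"
  by (simp add: complex_eq_iff)

lemma corr_add: "A \<in> carrier_mat 4 4 \<Longrightarrow> B \<in> carrier_mat 4 4 \<Longrightarrow> corr (A + B) a b = corr A a b + corr B a b"
  using pauli2_carrier_mat[of a b]
  by (simp add: corr_def add_mult_distrib_mat[of _ 4 4 _ _ 4] mtrace_add[of _ 4])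

lemma corr_diff: "A \<in> carrier_mat 4 4 \<Longrightarrow> B \<in> carrier_mat 4 4 \<Longrightarrow> corr (A - B) a b = corr A a b - corr B a b"
  using pauli2_carrier_mat[of a b]
  by (simp add: corr_def minus_mult_distrib_mat[of _ 4 4 _ _ 4] mtrace_def sum_subtractf)

lemma corr_sandwich_kron:
  assumes R: "R \<in> carrier_mat 4 4" and P: "P \<in> carrier_mat 2 2" and Q: "Q \<in> carrier_mat 2 2"
  shows "4 * corr (sandwich (kron P Q) R) a b
     = (\<Sum>m<4. \<Sum>n<4. pauli_coord m (sandwich P (pauli a)) * pauli_coord n (sandwich Q (pauli b)) * corr R m n)"
proof -
  have "corr (sandwich (kron P Q) R) a b = mtrace (R * sandwich (kron P Q) (pauli2 a b))"
    unfolding corr_def using R P Q by (intro mtrace_sandwich_mult kron_carrier_mat_2) auto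
  also have "\<dots> = mtrace (R * kron (sandwich P (pauli a)) (sandwich Q (pauli b)))"
    using P Q by (simp add: sandwich_kron)
  finally show ?thesis
    using mtrace_kron_corr_expansion[OF R sandwich_carrier_mat[OF P pauli_carrier]
        sandwich_carrier_mat[OF Q pauli_carrier]]
    by simp
qed

section \<open>Local projective measurements in Pauli coordinates\<close>

text \<open>
  Pauli transfer matrix of the one-qubit measurement channel \<open>A \<mapsto> P\<^sub>+ A P\<^sub>+ + P\<^sub>- A P\<^sub>-\<close>
  along \<open>k\<close>; for a unit vector it is \<open>2\<close> on \<open>\<sigma>\<^sub>0\<close> and \<open>2 k k\<^sup>t\<close> on the Bloch block.
\<close>

definition dephasing_coef :: "(nat \<Rightarrow> real) \<Rightarrow> nat \<Rightarrow> nat \<Rightarrow> real" where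
  "dephasing_coef k m a =
    (if m = 0 \<and> a = 0 then 1 + ((k 1)\<^sup>2 + (k 2)\<^sup>2 + (k 3)\<^sup>2)
     else if m = 0 \<or> a = 0 then 0
     else (if m = a then 1 - ((k 1)\<^sup>2 + (k 2)\<^sup>2 + (k 3)\<^sup>2) else 0) + 2 * k m * k a)"

lemma unit3_iff_sum: "unit3 k \<longleftrightarrow> (\<Sum>i\<in>{1,2,3::nat}. (k i)\<^sup>2) = 1"
  by (simp add: unit3_def add.assoc)

lemma dephasing_coef_unit:
  "unit3 k \<Longrightarrow> dephasing_coef k m a =
     (if m = 0 \<and> a = 0 then 2 else if m = 0 \<or> a = 0 then 0 else 2 * k m * k a)"
  by (simp add: dephasing_coef_def unit3_def)

lemma pauli_coord_dephasing:
  assumes "m < 4" "a < 4"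
  shows "pauli_coord m (sandwich (proj 1 k) (pauli a)) + pauli_coord m (sandwich (proj (-1) k) (pauli a))
       = complex_of_real (dephasing_coef k m a)"
  using assms
  by (simp add: pauli_coord_eq_sum sandwich_carrier_mat)
     (elim less_four_cases[of m] less_four_cases[of a];
      simp add: sum_lessThan_two sandwich_index_2 pauli_entries pauli_entries'
        proj_entries proj_entries' dephasing_coef_def;
      simp add: complex_eq_iff field_simps power2_eq_square)

lemma pauli_coord_pauli:
  "n < 4 \<Longrightarrow> b < 4 \<Longrightarrow> pauli_coord n (sandwich (1\<^sub>m 2) (pauli b)) = (if n = b then 2 else 0)"
  by (simp add: sandwich_def mtrace_pauli_mult)

lemma corr_chi:
  assumes R: "R \<in> carrier_mat 4 4" and ab: "a < 4" "b < 4"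
  shows "4 * corr (chi R k l) a b
       = (\<Sum>m<4. \<Sum>n<4. complex_of_real (dephasing_coef k m a) * complex_of_real (dephasing_coef l n b) * corr R m n)"
proof -
  define S where "S s t = sandwich (kron (proj s k) (proj t l)) R" for s t
  have S_carrier: "S s t \<in> carrier_mat 4 4" for s t
    unfolding S_def by (intro sandwich_carrier_mat kron_carrier_mat_2 R proj_carrier)
  define f where "f s m = pauli_coord m (sandwich (proj s k) (pauli a))" for s m
  define g where "g t n = pauli_coord n (sandwich (proj t l) (pauli b))" for t n
  have S_corr: "4 * corr (S s t) a b = (\<Sum>m<4. \<Sum>n<4. f s m * g t n * corr R m n)" for s t
    unfolding S_def f_def g_def by (rule corr_sandwich_kron[OF R proj_carrier proj_carrier])
  have "corr (chi R k l) a b = corr (S 1 1) a b + corr (S 1 (-1)) a b + corr (S (-1) 1) a b + corr (S (-1) (-1)) a b"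
    unfolding chi_def S_def[symmetric] using S_carrier by (simp add: corr_add)
  then have "4 * corr (chi R k l) a b
      = 4 * corr (S 1 1) a b + 4 * corr (S 1 (-1)) a b + 4 * corr (S (-1) 1) a b + 4 * corr (S (-1) (-1)) a b"
    by (simp add: algebra_simps)
  also have "\<dots> = (\<Sum>m<4. \<Sum>n<4. (f 1 m + f (-1) m) * (g 1 n + g (-1) n) * corr R m n)"
    unfolding S_corr by (simp add: algebra_simps sum.distrib)
  also have "\<dots> = (\<Sum>m<4. \<Sum>n<4. complex_of_real (dephasing_coef k m a) * complex_of_real (dephasing_coef l n b) * corr R m n)"
    by (intro sum.cong refl) (simp add: f_def g_def pauli_coord_dephasing ab)
  finally show ?thesis .
qed

lemma corr_rho_right:
  assumes R: "R \<in> carrier_mat 4 4" and ab: "a < 4" "b < 4"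
  shows "4 * corr (rho_right R k) a b
       = (\<Sum>m<4. \<Sum>n<4. complex_of_real (dephasing_coef k m a) * (if n = b then 2 else 0) * corr R m n)"
proof -
  define S where "S s = sandwich (kron (proj s k) (1\<^sub>m 2)) R" for s
  have S_carrier: "S s \<in> carrier_mat 4 4" for s
    unfolding S_def by (intro sandwich_carrier_mat kron_carrier_mat_2 R proj_carrier one_carrier_mat)
  define f where "f s m = pauli_coord m (sandwich (proj s k) (pauli a))" for s m
  define g where "g n = pauli_coord n (sandwich (1\<^sub>m 2) (pauli b))" for n
  have S_corr: "4 * corr (S s) a b = (\<Sum>m<4. \<Sum>n<4. f s m * g n * corr R m n)" for s
    unfolding S_def f_def g_def by (rule corr_sandwich_kron[OF R proj_carrier one_carrier_mat])
  have "corr (rho_right R k) a b = corr (S 1) a b + corr (S (-1)) a b"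
    unfolding rho_right_def S_def[symmetric] using S_carrier by (simp add: corr_add)
  then have "4 * corr (rho_right R k) a b = 4 * corr (S 1) a b + 4 * corr (S (-1)) a b"
    by (simp add: algebra_simps)
  also have "\<dots> = (\<Sum>m<4. \<Sum>n<4. (f 1 m + f (-1) m) * g n * corr R m n)"
    unfolding S_corr by (simp add: algebra_simps sum.distrib)
  also have "\<dots> = (\<Sum>m<4. \<Sum>n<4. complex_of_real (dephasing_coef k m a) * (if n = b then 2 else 0) * corr R m n)"
    by (intro sum.cong refl) (simp add: f_def g_def pauli_coord_dephasing pauli_coord_pauli ab)
  finally show ?thesis .
qed

lemma corr_rho_left:
  assumes R: "R \<in> carrier_mat 4 4" and ab: "a < 4" "b < 4"
  shows "4 * corr (rho_left R l) a b
       = (\<Sum>m<4. \<Sum>n<4. (if m = a then 2 else 0) * complex_of_real (dephasing_coef l n b) * corr R m n)"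
proof -
  define S where "S s = sandwich (kron (1\<^sub>m 2) (proj s l)) R" for s
  have S_carrier: "S s \<in> carrier_mat 4 4" for s
    unfolding S_def by (intro sandwich_carrier_mat kron_carrier_mat_2 R proj_carrier one_carrier_mat)
  define f where "f m = pauli_coord m (sandwich (1\<^sub>m 2) (pauli a))" for m
  define g where "g s n = pauli_coord n (sandwich (proj s l) (pauli b))" for s n
  have S_corr: "4 * corr (S s) a b = (\<Sum>m<4. \<Sum>n<4. f m * g s n * corr R m n)" for s
    unfolding S_def f_def g_def by (rule corr_sandwich_kron[OF R one_carrier_mat proj_carrier])
  have "corr (rho_left R l) a b = corr (S 1) a b + corr (S (-1)) a b"
    unfolding rho_left_def S_def[symmetric] using S_carrier by (simp add: corr_add)
  then have "4 * corr (rho_left R l) a b = 4 * corr (S 1) a b + 4 * corr (S (-1)) a b"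
    by (simp add: algebra_simps)
  also have "\<dots> = (\<Sum>m<4. \<Sum>n<4. f m * (g 1 n + g (-1) n) * corr R m n)"
    unfolding S_corr by (simp add: algebra_simps sum.distrib)
  also have "\<dots> = (\<Sum>m<4. \<Sum>n<4. (if m = a then 2 else 0) * complex_of_real (dephasing_coef l n b) * corr R m n)"
    by (intro sum.cong refl) (simp add: f_def g_def pauli_coord_dephasing pauli_coord_pauli ab)
  finally show ?thesis .
qed

section \<open>Distances to the measured states\<close>

lemma HS_dist_sq_corr:
  assumes R: "R \<in> carrier_mat 4 4" and X: "X \<in> carrier_mat 4 4"
    and y: "\<And>a b. a < 4 \<Longrightarrow> b < 4 \<Longrightarrow> corr R a b - corr X a b = complex_of_real (y a b)"
  shows "(HS_dist R X)\<^sup>2 = 1/4 * (\<Sum>a<4. \<Sum>b<4. (y a b)\<^sup>2)"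
proof -
  define S where "S = (\<Sum>a<4. \<Sum>b<4. (y a b)\<^sup>2)"
  define M where "M = mtrace ((R - X) * dagger (R - X))"
  have "4 * M = (\<Sum>a<4. \<Sum>b<4. complex_of_real ((y a b)\<^sup>2))"
    unfolding M_def mtrace_mult_dagger_corr[OF minus_carrier_mat[OF X]]
    by (intro sum.cong refl) (simp add: corr_diff[OF R X] y power2_eq_square)
  also have "\<dots> = complex_of_real S" by (simp add: S_def)
  finally have "4 * M = complex_of_real S" .
  from arg_cong[where f=Re, OF this] have "4 * Re M = S" by simp
  then have "Re M = S / 4" by simp
  moreover have "0 \<le> S" unfolding S_def by (intro sum_nonneg) auto
  ultimately show ?thesis unfolding HS_dist_def M_def[symmetric] by (simp add: S_def[symmetric])
qed

lemma sum_sq_diff_outer: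
  fixes T :: "'i \<Rightarrow> 'j \<Rightarrow> real"
  shows "(\<Sum>i\<in>I. \<Sum>j\<in>J. (T i j - x i * y j)\<^sup>2)
       = (\<Sum>i\<in>I. \<Sum>j\<in>J. (T i j)\<^sup>2) - 2 * (\<Sum>i\<in>I. \<Sum>j\<in>J. x i * y j * T i j)
         + (\<Sum>i\<in>I. (x i)\<^sup>2) * (\<Sum>j\<in>J. (y j)\<^sup>2)"
proof -
  have "(T i j - x i * y j)\<^sup>2 = (T i j)\<^sup>2 - 2 * (x i * y j * T i j) + (x i)\<^sup>2 * (y j)\<^sup>2" for i j
    by (simp add: power2_eq_square algebra_simps)
  then have "(\<Sum>i\<in>I. \<Sum>j\<in>J. (T i j - x i * y j)\<^sup>2)
      = (\<Sum>i\<in>I. \<Sum>j\<in>J. (T i j)\<^sup>2) - (\<Sum>i\<in>I. \<Sum>j\<in>J. 2 * (x i * y j * T i j))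
        + (\<Sum>i\<in>I. \<Sum>j\<in>J. (x i)\<^sup>2 * (y j)\<^sup>2)"
    by (simp add: sum.distrib sum_subtractf)
  also have "(\<Sum>i\<in>I. \<Sum>j\<in>J. 2 * (x i * y j * T i j)) = 2 * (\<Sum>i\<in>I. \<Sum>j\<in>J. x i * y j * T i j)"
    by (simp add: sum_distrib_left)
  also have "(\<Sum>i\<in>I. \<Sum>j\<in>J. (x i)\<^sup>2 * (y j)\<^sup>2) = (\<Sum>i\<in>I. (x i)\<^sup>2) * (\<Sum>j\<in>J. (y j)\<^sup>2)"
    by (rule sum_product[symmetric])
  finally show ?thesis .
qed

text \<open>Hermitian, of unit trace (\<open>corr R 0 0 = tr R\<close>), with both reduced states equal to \<open>1/2\<close>.\<close>

definition maximally_mixed_marginals :: "complex mat \<Rightarrow> bool" where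
  "maximally_mixed_marginals R \<longleftrightarrow> R \<in> carrier_mat 4 4 \<and> dagger R = R \<and> corr R 0 0 = 1 \<and>
     (\<forall>i\<in>{1,2,3}. corr R i 0 = 0) \<and> (\<forall>i\<in>{1,2,3}. corr R 0 i = 0)"

lemma maximally_mixed_marginalsD:
  assumes "maximally_mixed_marginals R"
  shows "R \<in> carrier_mat 4 4"
    and "\<And>m n. m < 4 \<Longrightarrow> n < 4 \<Longrightarrow> corr R m n = complex_of_real (Re (corr R m n))"
    and "Re (corr R 0 0) = 1" "Re (corr R 1 0) = 0" "Re (corr R 2 0) = 0" "Re (corr R 3 0) = 0"
      "Re (corr R 0 1) = 0" "Re (corr R 0 2) = 0" "Re (corr R 0 3) = 0"
  using assms of_real_Re_eq_if_cnj_eq[OF corr_hermitian_real]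
  by (auto simp: maximally_mixed_marginals_def)

lemma residual_chi:
  fixes r :: "nat \<Rightarrow> nat \<Rightarrow> real"
  assumes k: "unit3 k" and l: "unit3 l"
    and r0: "r 0 0 = 1" "r 1 0 = 0" "r 2 0 = 0" "r 3 0 = 0" "r 0 1 = 0" "r 0 2 = 0" "r 0 3 = 0"
    and ab: "a < 4" "b < 4"
  shows "r a b - 1/4 * (\<Sum>m<4. \<Sum>n<4. dephasing_coef k m a * dephasing_coef l n b * r m n)
     = (if a = 0 \<or> b = 0 then 0
        else r a b - k a * (l b * (\<Sum>i\<in>{1,2,3::nat}. \<Sum>j\<in>{1,2,3::nat}. k i * l j * r i j)))"
  using ab
  by (simp add: dephasing_coef_unit[OF k] dephasing_coef_unit[OF l])
     (elim less_four_cases[of a] less_four_cases[of b];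
      simp add: sum_lessThan_four r0 r0[unfolded One_nat_def] algebra_simps)

lemma residual_rho_right:
  fixes r :: "nat \<Rightarrow> nat \<Rightarrow> real"
  assumes k: "unit3 k"
    and r0: "r 0 0 = 1" "r 1 0 = 0" "r 2 0 = 0" "r 3 0 = 0" "r 0 1 = 0" "r 0 2 = 0" "r 0 3 = 0"
    and ab: "a < 4" "b < 4"
  shows "r a b - 1/4 * (\<Sum>m<4. \<Sum>n<4. dephasing_coef k m a * (if n = b then 2 else 0) * r m n)
     = (if a = 0 \<or> b = 0 then 0 else r a b - k a * (\<Sum>i\<in>{1,2,3::nat}. k i * r i b))"
  using ab
  by (simp add: dephasing_coef_unit[OF k])
     (elim less_four_cases[of a] less_four_cases[of b];
      simp add: sum_lessThan_four r0 r0[unfolded One_nat_def] algebra_simps)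

lemma residual_rho_left:
  fixes r :: "nat \<Rightarrow> nat \<Rightarrow> real"
  assumes l: "unit3 l"
    and r0: "r 0 0 = 1" "r 1 0 = 0" "r 2 0 = 0" "r 3 0 = 0" "r 0 1 = 0" "r 0 2 = 0" "r 0 3 = 0"
    and ab: "a < 4" "b < 4"
  shows "r a b - 1/4 * (\<Sum>m<4. \<Sum>n<4. (if m = a then 2 else 0) * dephasing_coef l n b * r m n)
     = (if a = 0 \<or> b = 0 then 0 else r a b - (\<Sum>j\<in>{1,2,3::nat}. l j * r a j) * l b)"
  using ab
  by (simp add: dephasing_coef_unit[OF l])
     (elim less_four_cases[of a] less_four_cases[of b];
      simp add: sum_lessThan_four r0 r0[unfolded One_nat_def] algebra_simps)

lemma HS_dist_chi:
  assumes R: "maximally_mixed_marginals R" and k: "unit3 k" and l: "unit3 l"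
  shows "(HS_dist R (chi R k l))\<^sup>2
       = 1/4 * ((\<Sum>i\<in>{1,2,3::nat}. \<Sum>j\<in>{1,2,3::nat}. (Re (corr R i j))\<^sup>2)
                - (\<Sum>i\<in>{1,2,3::nat}. \<Sum>j\<in>{1,2,3::nat}. k i * l j * Re (corr R i j))\<^sup>2)"
proof -
  note mm = maximally_mixed_marginalsD[OF R]
  define r where "r m n = Re (corr R m n)" for m n
  have cr: "corr R m n = complex_of_real (r m n)" if "m < 4" "n < 4" for m n
    unfolding r_def by (rule mm(2)[OF that])
  have r0: "r 0 0 = 1" "r 1 0 = 0" "r 2 0 = 0" "r 3 0 = 0" "r 0 1 = 0" "r 0 2 = 0" "r 0 3 = 0"
    unfolding r_def by (fact mm(3-9))+
  define s where "s = (\<Sum>i\<in>{1,2,3::nat}. \<Sum>j\<in>{1,2,3::nat}. k i * l j * r i j)"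
  define y where "y a b = r a b - 1/4 * (\<Sum>m<4. \<Sum>n<4. dephasing_coef k m a * dephasing_coef l n b * r m n)" for a b
  have y: "corr R a b - corr (chi R k l) a b = complex_of_real (y a b)" if ab: "a < 4" "b < 4" for a b
  proof -
    have "4 * corr (chi R k l) a b
        = (\<Sum>m<4. \<Sum>n<4. complex_of_real (dephasing_coef k m a * dephasing_coef l n b * r m n))"
      unfolding corr_chi[OF mm(1) ab] by (intro sum.cong refl) (simp add: cr)
    also have "\<dots> = complex_of_real (\<Sum>m<4. \<Sum>n<4. dephasing_coef k m a * dephasing_coef l n b * r m n)"
      by simp
    finally show ?thesis unfolding y_def cr[OF ab] by (simp add: field_simps)
  qed
  have yv: "y a b = (if a = 0 \<or> b = 0 then 0 else r a b - k a * (l b * s))" if "a < 4" "b < 4" for a b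
    unfolding y_def s_def by (rule residual_chi[OF k l r0 that])
  have "(HS_dist R (chi R k l))\<^sup>2 = 1/4 * (\<Sum>a<4. \<Sum>b<4. (y a b)\<^sup>2)"
    by (rule HS_dist_sq_corr[OF mm(1) chi_carrier_mat[OF mm(1)] y])
  also have "(\<Sum>a<4. \<Sum>b<4. (y a b)\<^sup>2)
      = (\<Sum>a<4::nat. \<Sum>b<4::nat. if a = 0 \<or> b = 0 then 0 else (r a b - k a * (l b * s))\<^sup>2)"
    by (intro sum.cong refl) (simp add: yv)
  also have "\<dots> = (\<Sum>i\<in>{1,2,3::nat}. \<Sum>j\<in>{1,2,3::nat}. (r i j - k i * (l j * s))\<^sup>2)"
    by (rule sum_lessThan_four_off_axes)
  also have "\<dots> = (\<Sum>i\<in>{1,2,3::nat}. \<Sum>j\<in>{1,2,3::nat}. (r i j)\<^sup>2) - s\<^sup>2"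
  proof -
    have "(\<Sum>i\<in>{1,2,3::nat}. \<Sum>j\<in>{1,2,3::nat}. k i * (l j * s) * r i j)
        = s * (\<Sum>i\<in>{1,2,3::nat}. \<Sum>j\<in>{1,2,3::nat}. k i * l j * r i j)"
      by (simp add: algebra_simps)
    also have "\<dots> = s\<^sup>2" by (simp add: s_def power2_eq_square)
    finally have cross: "(\<Sum>i\<in>{1,2,3::nat}. \<Sum>j\<in>{1,2,3::nat}. k i * (l j * s) * r i j) = s\<^sup>2" .
    have norm: "(\<Sum>j\<in>{1,2,3::nat}. (l j * s)\<^sup>2) = (\<Sum>j\<in>{1,2,3::nat}. (l j)\<^sup>2) * s\<^sup>2"
      by (simp add: power_mult_distrib algebra_simps)
    show ?thesis
      unfolding sum_sq_diff_outer cross norm using k l by (simp add: unit3_iff_sum)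
  qed
  finally show ?thesis by (simp add: r_def s_def)
qed

lemma HS_dist_rho_right:
  assumes R: "maximally_mixed_marginals R" and k: "unit3 k"
  shows "(HS_dist R (rho_right R k))\<^sup>2
       = 1/4 * ((\<Sum>i\<in>{1,2,3::nat}. \<Sum>j\<in>{1,2,3::nat}. (Re (corr R i j))\<^sup>2)
                - (\<Sum>j\<in>{1,2,3::nat}. (\<Sum>i\<in>{1,2,3::nat}. k i * Re (corr R i j))\<^sup>2))"
proof -
  note mm = maximally_mixed_marginalsD[OF R]
  define r where "r m n = Re (corr R m n)" for m n
  have cr: "corr R m n = complex_of_real (r m n)" if "m < 4" "n < 4" for m n
    unfolding r_def by (rule mm(2)[OF that])
  have r0: "r 0 0 = 1" "r 1 0 = 0" "r 2 0 = 0" "r 3 0 = 0" "r 0 1 = 0" "r 0 2 = 0" "r 0 3 = 0"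
    unfolding r_def by (fact mm(3-9))+
  define d where "d j = (\<Sum>i\<in>{1,2,3::nat}. k i * r i j)" for j
  define y where "y a b = r a b - 1/4 * (\<Sum>m<4. \<Sum>n<4. dephasing_coef k m a * (if n = b then 2 else 0) * r m n)" for a b
  have y: "corr R a b - corr (rho_right R k) a b = complex_of_real (y a b)" if ab: "a < 4" "b < 4" for a b
  proof -
    have "4 * corr (rho_right R k) a b
        = (\<Sum>m<4. \<Sum>n<4. complex_of_real (dephasing_coef k m a * (if n = b then 2 else 0) * r m n))"
      unfolding corr_rho_right[OF mm(1) ab] by (intro sum.cong refl) (simp add: cr)
    also have "\<dots> = complex_of_real (\<Sum>m<4. \<Sum>n<4. dephasing_coef k m a * (if n = b then 2 else 0) * r m n)"
      by simp
    finally show ?thesis unfolding y_def cr[OF ab] by (simp add: field_simps)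
  qed
  have yv: "y a b = (if a = 0 \<or> b = 0 then 0 else r a b - k a * d b)" if "a < 4" "b < 4" for a b
    unfolding y_def d_def by (rule residual_rho_right[OF k r0 that])
  have "(HS_dist R (rho_right R k))\<^sup>2 = 1/4 * (\<Sum>a<4. \<Sum>b<4. (y a b)\<^sup>2)"
    by (rule HS_dist_sq_corr[OF mm(1) rho_right_carrier_mat[OF mm(1)] y])
  also have "(\<Sum>a<4. \<Sum>b<4. (y a b)\<^sup>2)
      = (\<Sum>a<4::nat. \<Sum>b<4::nat. if a = 0 \<or> b = 0 then 0 else (r a b - k a * d b)\<^sup>2)"
    by (intro sum.cong refl) (simp add: yv)
  also have "\<dots> = (\<Sum>i\<in>{1,2,3::nat}. \<Sum>j\<in>{1,2,3::nat}. (r i j - k i * d j)\<^sup>2)"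
    by (rule sum_lessThan_four_off_axes)
  also have "\<dots> = (\<Sum>i\<in>{1,2,3::nat}. \<Sum>j\<in>{1,2,3::nat}. (r i j)\<^sup>2) - (\<Sum>j\<in>{1,2,3::nat}. (d j)\<^sup>2)"
  proof -
    have cross: "(\<Sum>i\<in>{1,2,3::nat}. \<Sum>j\<in>{1,2,3::nat}. k i * d j * r i j) = (\<Sum>j\<in>{1,2,3::nat}. (d j)\<^sup>2)"
      unfolding d_def by (simp add: algebra_simps power2_eq_square)
    show ?thesis
      unfolding sum_sq_diff_outer cross using k by (simp add: unit3_iff_sum)
  qed
  finally show ?thesis by (simp add: r_def d_def)
qed

lemma HS_dist_rho_left:
  assumes R: "maximally_mixed_marginals R" and l: "unit3 l"
  shows "(HS_dist R (rho_left R l))\<^sup>2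
       = 1/4 * ((\<Sum>i\<in>{1,2,3::nat}. \<Sum>j\<in>{1,2,3::nat}. (Re (corr R i j))\<^sup>2)
                - (\<Sum>i\<in>{1,2,3::nat}. (\<Sum>j\<in>{1,2,3::nat}. l j * Re (corr R i j))\<^sup>2))"
proof -
  note mm = maximally_mixed_marginalsD[OF R]
  define r where "r m n = Re (corr R m n)" for m n
  have cr: "corr R m n = complex_of_real (r m n)" if "m < 4" "n < 4" for m n
    unfolding r_def by (rule mm(2)[OF that])
  have r0: "r 0 0 = 1" "r 1 0 = 0" "r 2 0 = 0" "r 3 0 = 0" "r 0 1 = 0" "r 0 2 = 0" "r 0 3 = 0"
    unfolding r_def by (fact mm(3-9))+
  define e where "e i = (\<Sum>j\<in>{1,2,3::nat}. l j * r i j)" for i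
  define y where "y a b = r a b - 1/4 * (\<Sum>m<4. \<Sum>n<4. (if m = a then 2 else 0) * dephasing_coef l n b * r m n)" for a b
  have y: "corr R a b - corr (rho_left R l) a b = complex_of_real (y a b)" if ab: "a < 4" "b < 4" for a b
  proof -
    have "4 * corr (rho_left R l) a b
        = (\<Sum>m<4. \<Sum>n<4. complex_of_real ((if m = a then 2 else 0) * dephasing_coef l n b * r m n))"
      unfolding corr_rho_left[OF mm(1) ab] by (intro sum.cong refl) (simp add: cr)
    also have "\<dots> = complex_of_real (\<Sum>m<4. \<Sum>n<4. (if m = a then 2 else 0) * dephasing_coef l n b * r m n)"
      by simp
    finally show ?thesis unfolding y_def cr[OF ab] by (simp add: field_simps)
  qed
  have yv: "y a b = (if a = 0 \<or> b = 0 then 0 else r a b - e a * l b)" if "a < 4" "b < 4" for a b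
    unfolding y_def e_def by (rule residual_rho_left[OF l r0 that])
  have "(HS_dist R (rho_left R l))\<^sup>2 = 1/4 * (\<Sum>a<4. \<Sum>b<4. (y a b)\<^sup>2)"
    by (rule HS_dist_sq_corr[OF mm(1) rho_left_carrier_mat[OF mm(1)] y])
  also have "(\<Sum>a<4. \<Sum>b<4. (y a b)\<^sup>2)
      = (\<Sum>a<4::nat. \<Sum>b<4::nat. if a = 0 \<or> b = 0 then 0 else (r a b - e a * l b)\<^sup>2)"
    by (intro sum.cong refl) (simp add: yv)
  also have "\<dots> = (\<Sum>i\<in>{1,2,3::nat}. \<Sum>j\<in>{1,2,3::nat}. (r i j - e i * l j)\<^sup>2)"
    by (rule sum_lessThan_four_off_axes)
  also have "\<dots> = (\<Sum>i\<in>{1,2,3::nat}. \<Sum>j\<in>{1,2,3::nat}. (r i j)\<^sup>2) - (\<Sum>i\<in>{1,2,3::nat}. (e i)\<^sup>2)"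
  proof -
    have cross: "(\<Sum>i\<in>{1,2,3::nat}. \<Sum>j\<in>{1,2,3::nat}. e i * l j * r i j) = (\<Sum>i\<in>{1,2,3::nat}. (e i)\<^sup>2)"
      unfolding e_def by (simp add: algebra_simps power2_eq_square)
    show ?thesis
      unfolding sum_sq_diff_outer cross using l by (simp add: unit3_iff_sum)
  qed
  finally show ?thesis by (simp add: r_def e_def)
qed

section \<open>Local unitaries act on the correlation block by rotations\<close>

lemma unitary2D: "unitary2 U \<Longrightarrow> U \<in> carrier_mat 2 2" "unitary2 U \<Longrightarrow> U * dagger U = 1\<^sub>m 2"
  by (simp_all add: unitary2_def)

lemma unitary2_dagger: "unitary2 U \<Longrightarrow> unitary2 (dagger U)"
  using unitary_dagger dagger_carrier_mat by (auto simp: unitary2_def)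

definition pauli_conj :: "complex mat \<Rightarrow> nat \<Rightarrow> complex mat" where
  "pauli_conj U i = dagger U * pauli i * U"

text \<open>\<open>U\<^sup>\<dagger> \<sigma>\<^sub>i U = \<Sum>\<^sub>m adjoint_coef U i m \<sigma>\<^sub>m\<close>: the real orthogonal matrix \<open>O\<^sub>U\<close> of the
  adjoint action (the factor \<open>1/2\<close> is \<open>1 / tr (\<sigma>\<^sub>m\<sigma>\<^sub>m)\<close>).\<close>

definition adjoint_coef :: "complex mat \<Rightarrow> nat \<Rightarrow> nat \<Rightarrow> real" where
  "adjoint_coef U i m = Re (pauli_coord m (pauli_conj U i)) / 2"

lemma pauli_conj_carrier_mat: "U \<in> carrier_mat 2 2 \<Longrightarrow> pauli_conj U i \<in> carrier_mat 2 2"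
  unfolding pauli_conj_def by (auto intro!: mult_carrier_mat dagger_carrier_mat)

lemma pauli_conj_hermitian:
  assumes U: "U \<in> carrier_mat 2 2" and i: "i < 4"
  shows "dagger (pauli_conj U i) = pauli_conj U i"
proof -
  have dU: "dagger U \<in> carrier_mat 2 2" using U by (rule dagger_carrier_mat)
  have "dagger (pauli_conj U i) = dagger U * dagger (dagger U * pauli i)"
    unfolding pauli_conj_def using dU U by (simp add: dagger_mult[of _ 2 2 U 2] dagger_dagger)
  also have "\<dots> = dagger U * (pauli i * U)"
    by (simp add: dagger_mult[OF dU pauli_carrier] dagger_dagger dagger_pauli[OF i])
  also have "\<dots> = pauli_conj U i"
    unfolding pauli_conj_def using dU U by (simp add: mult_assoc_2 mult_carrier_mat_2)
  finally show ?thesis .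
qed

lemma mtrace_pauli_conj:
  assumes U: "unitary2 U"
  shows "mtrace (pauli_conj U i) = mtrace (pauli i)"
proof -
  have Uc: "U \<in> carrier_mat 2 2" and u: "U * dagger U = 1\<^sub>m 2" using unitary2D[OF U] .
  have dU: "dagger U \<in> carrier_mat 2 2" using Uc by (rule dagger_carrier_mat)
  have "mtrace (pauli_conj U i) = mtrace (U * (dagger U * pauli i))"
    unfolding pauli_conj_def by (rule mtrace_mult_commute) (use dU Uc in auto)
  also have "\<dots> = mtrace ((U * dagger U) * pauli i)"
    using Uc dU by (simp add: mult_assoc_2 mult_carrier_mat_2)
  finally show ?thesis by (simp add: u)
qed

lemma mtrace_pauli_conj_mult:
  assumes U: "unitary2 U"
  shows "mtrace (pauli_conj U i * pauli_conj U j) = mtrace (pauli i * pauli j)"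
proof -
  have Uc: "U \<in> carrier_mat 2 2" and u: "U * dagger U = 1\<^sub>m 2" using unitary2D[OF U] .
  have dU: "dagger U \<in> carrier_mat 2 2" using Uc by (rule dagger_carrier_mat)
  have "pauli_conj U i * pauli_conj U j = dagger U * pauli i * (U * dagger U) * pauli j * U"
    unfolding pauli_conj_def using Uc dU by (simp add: mult_assoc_2 mult_carrier_mat_2)
  also have "\<dots> = dagger U * (pauli i * pauli j) * U"
    using Uc dU by (simp add: u mult_assoc_2 mult_carrier_mat_2)
  finally have "mtrace (pauli_conj U i * pauli_conj U j) = mtrace (U * (dagger U * (pauli i * pauli j)))"
    by (simp only:) (rule mtrace_mult_commute, use dU Uc in auto)
  also have "\<dots> = mtrace ((U * dagger U) * (pauli i * pauli j))"
    using Uc dU by (simp add: mult_assoc_2 mult_carrier_mat_2)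
  finally show ?thesis by (simp add: u)
qed

lemma pauli_coord_pauli_conj:
  assumes U: "U \<in> carrier_mat 2 2" and "m < 4" "i < 4"
  shows "pauli_coord m (pauli_conj U i) = complex_of_real (2 * adjoint_coef U i m)"
  using of_real_Re_eq_if_cnj_eq[OF pauli_coord_hermitian_real[OF pauli_conj_carrier_mat[OF U]
        pauli_conj_hermitian[OF U \<open>i < 4\<close>] \<open>m < 4\<close>]]
  by (simp add: adjoint_coef_def)

lemma pauli_coord_zero_pauli_conj:
  assumes U: "unitary2 U" and i: "i \<in> {1,2,3}"
  shows "pauli_coord 0 (pauli_conj U i) = 0"
  using pauli_conj_carrier_mat[OF unitary2D(1)[OF U], of i] mtrace_pauli_conj[OF U, of i] i
  by (auto simp: pauli_zero mtrace_pauli)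

lemma adjoint_coef_zero:
  assumes "unitary2 U" "i \<in> {1,2,3}"
  shows "adjoint_coef U i 0 = 0"
  using pauli_coord_zero_pauli_conj[OF assms] by (simp add: adjoint_coef_def)

lemma adjoint_coef_orthonormal:
  assumes U: "unitary2 U" and i: "i \<in> {1,2,3}" and j: "j \<in> {1,2,3}"
  shows "(\<Sum>m\<in>{1,2,3::nat}. adjoint_coef U i m * adjoint_coef U j m) = (if i = j then 1 else 0)"
proof -
  have Uc: "U \<in> carrier_mat 2 2" using unitary2D(1)[OF U] .
  have i4: "i < 4" and j4: "j < 4" using i j by auto
  have "2 * mtrace (pauli_conj U i * pauli_conj U j) = (\<Sum>a<4. pauli_coord a (pauli_conj U i) * pauli_coord a (pauli_conj U j))"
    by (rule mtrace_mult_pauli_coord[OF pauli_conj_carrier_mat[OF Uc] pauli_conj_carrier_mat[OF Uc]])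
  also have "\<dots> = complex_of_real (4 * (\<Sum>m\<in>{1,2,3::nat}. adjoint_coef U i m * adjoint_coef U j m))"
    by (simp add: sum_lessThan_four pauli_coord_pauli_conj[OF Uc _ i4] pauli_coord_pauli_conj[OF Uc _ j4]
        adjoint_coef_zero[OF U i] adjoint_coef_zero[OF U j] algebra_simps)
  finally have "complex_of_real (4 * (\<Sum>m\<in>{1,2,3::nat}. adjoint_coef U i m * adjoint_coef U j m))
      = 2 * mtrace (pauli i * pauli j)"
    by (simp add: mtrace_pauli_conj_mult[OF U])
  also have "\<dots> = complex_of_real (if i = j then 4 else 0)"
    using mtrace_pauli_mult[OF i4 j4] by simp
  finally have "4 * (\<Sum>m\<in>{1,2,3::nat}. adjoint_coef U i m * adjoint_coef U j m) = (if i = j then 4 else 0)"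
    by (simp only: of_real_eq_iff)
  then show ?thesis by (cases "i = j") auto
qed

lemma adjoint_coef_dagger:
  assumes U: "U \<in> carrier_mat 2 2"
  shows "adjoint_coef (dagger U) m i = adjoint_coef U i m"
proof -
  have dU: "dagger U \<in> carrier_mat 2 2" using U by (rule dagger_carrier_mat)
  have c1: "pauli m * dagger U \<in> carrier_mat 2 2" and c2: "pauli i * U \<in> carrier_mat 2 2"
    by (intro mult_carrier_mat_2 dU U pauli_carrier)+
  have "pauli_coord m (pauli_conj U i) = mtrace ((pauli m * dagger U) * (pauli i * U))"
    unfolding pauli_conj_def using U dU by (simp add: mult_assoc_2 mult_carrier_mat_2)
  also have "\<dots> = mtrace ((pauli i * U) * (pauli m * dagger U))"
    by (rule mtrace_mult_commute[OF c1 c2])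
  also have "\<dots> = pauli_coord i (pauli_conj (dagger U) m)"
    unfolding pauli_conj_def dagger_dagger using U dU by (simp add: mult_assoc_2 mult_carrier_mat_2)
  finally show ?thesis by (simp add: adjoint_coef_def)
qed

definition orthogonal_on :: "'i set \<Rightarrow> ('i \<Rightarrow> 'i \<Rightarrow> real) \<Rightarrow> bool" where
  "orthogonal_on I A \<longleftrightarrow>
     (\<forall>i\<in>I. \<forall>j\<in>I. (\<Sum>m\<in>I. A i m * A j m) = (if i = j then 1 else 0)) \<and>
     (\<forall>m\<in>I. \<forall>p\<in>I. (\<Sum>q\<in>I. A q m * A q p) = (if m = p then 1 else 0))"

lemma orthogonal_on_adjoint_coef:
  assumes U: "unitary2 U"
  shows "orthogonal_on {1,2,3} (adjoint_coef U)"
  using adjoint_coef_orthonormal[OF U] adjoint_coef_orthonormal[OF unitary2_dagger[OF U]]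
  unfolding orthogonal_on_def adjoint_coef_dagger[OF unitary2D(1)[OF U]] by blast

lemma corr_kron_conj:
  assumes R: "R \<in> carrier_mat 4 4" and U: "U \<in> carrier_mat 2 2" and V: "V \<in> carrier_mat 2 2"
  shows "corr (kron U V * R * dagger (kron U V)) i j = mtrace (R * kron (pauli_conj U i) (pauli_conj V j))"
proof -
  define W where "W = kron U V"
  have W: "W \<in> carrier_mat 4 4" unfolding W_def by (rule kron_carrier_mat_2[OF U V])
  have dW: "dagger W \<in> carrier_mat 4 4" using W by (rule dagger_carrier_mat)
  have S: "pauli2 i j \<in> carrier_mat 4 4" by (rule pauli2_carrier_mat)
  have RWS: "R * dagger W * pauli2 i j \<in> carrier_mat 4 4" by (intro mult_carrier_mat_4 R dW S)
  have dU: "dagger U \<in> carrier_mat 2 2" and dV: "dagger V \<in> carrier_mat 2 2"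
    using U V by (auto intro: dagger_carrier_mat)
  have "corr (W * R * dagger W) i j = mtrace (W * (R * dagger W * pauli2 i j))"
    unfolding corr_def using W R dW S by (simp add: mult_assoc_4 mult_carrier_mat_4)
  also have "\<dots> = mtrace ((R * dagger W * pauli2 i j) * W)" by (rule mtrace_mult_commute[OF W RWS])
  also have "\<dots> = mtrace (R * (dagger W * pauli2 i j * W))"
    using W R dW S by (simp add: mult_assoc_4 mult_carrier_mat_4)
  also have "dagger W * pauli2 i j * W = kron (dagger U * pauli i) (dagger V * pauli j) * kron U V"
    unfolding W_def dagger_kron[OF U V] by (simp add: kron_mult[OF dU dV pauli_carrier pauli_carrier])
  also have "\<dots> = kron (pauli_conj U i) (pauli_conj V j)"
    unfolding pauli_conj_def
    by (rule kron_mult[OF mult_carrier_mat_2[OF dU pauli_carrier] mult_carrier_mat_2[OF dV pauli_carrier] U V])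
  finally show ?thesis unfolding W_def .
qed

lemma corr_local_unitary:
  assumes R: "maximally_mixed_marginals R" and U: "unitary2 U" and V: "unitary2 V"
    and i: "i \<in> {1,2,3}" and j: "j \<in> {1,2,3}"
  shows "corr (kron U V * R * dagger (kron U V)) i j
     = complex_of_real (\<Sum>m\<in>{1,2,3::nat}. \<Sum>n\<in>{1,2,3::nat}.
          adjoint_coef U i m * adjoint_coef V j n * Re (corr R m n))"
proof -
  define S where "S = (\<Sum>m\<in>{1,2,3::nat}. \<Sum>n\<in>{1,2,3::nat}.
          adjoint_coef U i m * adjoint_coef V j n * Re (corr R m n))"
  note mm = maximally_mixed_marginalsD[OF R]
  have Uc: "U \<in> carrier_mat 2 2" and Vc: "V \<in> carrier_mat 2 2" using unitary2D U V by auto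
  have i4: "i < 4" and j4: "j < 4" using i j by auto
  have coef: "pauli_coord m (pauli_conj U i) * pauli_coord n (pauli_conj V j) * corr R m n
      = complex_of_real (if m = 0 \<or> n = 0 then 0
          else 4 * (adjoint_coef U i m * adjoint_coef V j n * Re (corr R m n)))"
    if "m < 4" "n < 4" for m n
  proof (cases "m = 0 \<or> n = 0")
    case True
    then show ?thesis using pauli_coord_zero_pauli_conj[OF U i] pauli_coord_zero_pauli_conj[OF V j] by auto
  next
    case False
    then show ?thesis
      using mm(2)[OF that] by (simp add: pauli_coord_pauli_conj[OF Uc that(1) i4]
          pauli_coord_pauli_conj[OF Vc that(2) j4])
  qed
  have "4 * corr (kron U V * R * dagger (kron U V)) i j
      = (\<Sum>m<4. \<Sum>n<4. pauli_coord m (pauli_conj U i) * pauli_coord n (pauli_conj V j) * corr R m n)"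
    unfolding corr_kron_conj[OF mm(1) Uc Vc]
    by (rule mtrace_kron_corr_expansion[OF mm(1) pauli_conj_carrier_mat[OF Uc] pauli_conj_carrier_mat[OF Vc]])
  also have "\<dots> = (\<Sum>m<4::nat. \<Sum>n<4::nat. complex_of_real (if m = 0 \<or> n = 0 then 0
          else 4 * (adjoint_coef U i m * adjoint_coef V j n * Re (corr R m n))))"
    by (intro sum.cong refl) (simp add: coef)
  also have "\<dots> = complex_of_real (\<Sum>m<4::nat. \<Sum>n<4::nat. if m = 0 \<or> n = 0 then 0
          else 4 * (adjoint_coef U i m * adjoint_coef V j n * Re (corr R m n)))"
    by simp
  also have "\<dots> = complex_of_real (4 * S)"
    unfolding S_def sum_lessThan_four_off_axes by (simp add: sum_distrib_left)
  finally show ?thesis unfolding S_def[symmetric] by simp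
qed

section \<open>Quadratic forms of \<open>A\<^sup>T diag t B\<close> for orthogonal \<open>A\<close>, \<open>B\<close>\<close>

lemma sum_sq_orthonormal_combination:
  fixes F :: "'q \<Rightarrow> 'i \<Rightarrow> real"
  assumes Q: "finite Q"
    and F: "\<And>q q'. q \<in> Q \<Longrightarrow> q' \<in> Q \<Longrightarrow> (\<Sum>m\<in>I. F q m * F q' m) = (if q = q' then 1 else 0)"
  shows "(\<Sum>m\<in>I. (\<Sum>q\<in>Q. F q m * z q)\<^sup>2) = (\<Sum>q\<in>Q. (z q)\<^sup>2)"
proof -
  have "(\<Sum>m\<in>I. (\<Sum>q\<in>Q. F q m * z q)\<^sup>2) = (\<Sum>m\<in>I. \<Sum>q\<in>Q. \<Sum>q'\<in>Q. F q m * F q' m * (z q * z q'))"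
    by (simp add: power2_eq_square sum_product mult_ac)
  also have "\<dots> = (\<Sum>q\<in>Q. \<Sum>m\<in>I. \<Sum>q'\<in>Q. F q m * F q' m * (z q * z q'))"
    by (rule sum.swap)
  also have "\<dots> = (\<Sum>q\<in>Q. \<Sum>q'\<in>Q. \<Sum>m\<in>I. F q m * F q' m * (z q * z q'))"
    by (rule sum.cong[OF refl]) (rule sum.swap)
  also have "\<dots> = (\<Sum>q\<in>Q. \<Sum>q'\<in>Q. (\<Sum>m\<in>I. F q m * F q' m) * (z q * z q'))"
    by (simp add: sum_distrib_right)
  also have "\<dots> = (\<Sum>q\<in>Q. \<Sum>q'\<in>Q. if q = q' then z q * z q' else 0)"
    by (intro sum.cong refl) (simp add: F)
  also have "\<dots> = (\<Sum>q\<in>Q. (z q)\<^sup>2)"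
    using Q by (simp add: power2_eq_square)
  finally show ?thesis .
qed

lemma orthogonal_on_sum_sq_rows:
  "finite I \<Longrightarrow> orthogonal_on I A \<Longrightarrow> (\<Sum>m\<in>I. (\<Sum>q\<in>I. A q m * z q)\<^sup>2) = (\<Sum>q\<in>I. (z q)\<^sup>2)"
  by (rule sum_sq_orthonormal_combination) (auto simp: orthogonal_on_def)

lemma orthogonal_on_sum_sq_cols:
  "finite I \<Longrightarrow> orthogonal_on I A \<Longrightarrow> (\<Sum>q\<in>I. (\<Sum>m\<in>I. A q m * z m)\<^sup>2) = (\<Sum>m\<in>I. (z m)\<^sup>2)"
  by (rule sum_sq_orthonormal_combination[where F="\<lambda>m q. A q m"]) (auto simp: orthogonal_on_def)

lemma orthogonal_on_contract:
  assumes I: "finite I" and A: "orthogonal_on I A" and m: "m \<in> I"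
  shows "(\<Sum>q\<in>I. A q m * (\<Sum>p\<in>I. A q p * x p)) = x m"
proof -
  have "(\<Sum>q\<in>I. A q m * (\<Sum>p\<in>I. A q p * x p)) = (\<Sum>q\<in>I. \<Sum>p\<in>I. A q m * A q p * x p)"
    by (simp add: sum_distrib_left mult.assoc)
  also have "\<dots> = (\<Sum>p\<in>I. (\<Sum>q\<in>I. A q m * A q p) * x p)"
    by (subst sum.swap) (simp add: sum_distrib_right)
  also have "\<dots> = (\<Sum>p\<in>I. if m = p then x p else 0)"
    using A m by (intro sum.cong refl) (simp add: orthogonal_on_def)
  also have "\<dots> = x m" using I m by simp
  finally show ?thesis .
qed

lemma orthogonal_conj_diag:
  fixes A B r :: "'i \<Rightarrow> 'i \<Rightarrow> real"
  assumes I: "finite I" and A: "orthogonal_on I A" and B: "orthogonal_on I B"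
    and D: "\<And>i j. i \<in> I \<Longrightarrow> j \<in> I \<Longrightarrow> (\<Sum>m\<in>I. \<Sum>n\<in>I. A i m * B j n * r m n) = (if i = j then t i else 0)"
    and m: "m \<in> I" and n: "n \<in> I"
  shows "r m n = (\<Sum>q\<in>I. A q m * t q * B q n)"
proof -
  define y where "y s p = (\<Sum>p'\<in>I. B s p' * r p p')" for s p
  have Dy: "(\<Sum>p\<in>I. A q p * y s p) = (if q = s then t q else 0)" if "q \<in> I" "s \<in> I" for q s
    using D[OF that] unfolding y_def by (simp add: sum_distrib_left mult.assoc)
  have "(\<Sum>q\<in>I. A q m * t q * B q n) = (\<Sum>q\<in>I. \<Sum>s\<in>I. B s n * (A q m * (\<Sum>p\<in>I. A q p * y s p)))"
  proof (intro sum.cong refl)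
    fix q assume q: "q \<in> I"
    have "(\<Sum>s\<in>I. B s n * (A q m * (\<Sum>p\<in>I. A q p * y s p))) = (\<Sum>s\<in>I. if q = s then B s n * (A q m * t q) else 0)"
      by (intro sum.cong refl) (simp add: Dy q)
    then show "A q m * t q * B q n = (\<Sum>s\<in>I. B s n * (A q m * (\<Sum>p\<in>I. A q p * y s p)))"
      using I q by simp
  qed
  also have "\<dots> = (\<Sum>s\<in>I. B s n * (\<Sum>q\<in>I. A q m * (\<Sum>p\<in>I. A q p * y s p)))"
    by (subst sum.swap) (simp add: sum_distrib_left)
  also have "\<dots> = (\<Sum>s\<in>I. B s n * (\<Sum>p'\<in>I. B s p' * r m p'))"
    by (simp add: orthogonal_on_contract[OF I A m] y_def)
  also have "\<dots> = r m n" by (rule orthogonal_on_contract[OF I B n])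
  finally show ?thesis by simp
qed

lemma weighted_sum_sq_le_Max:
  fixes a t :: "'i \<Rightarrow> real"
  assumes I: "finite I" and a: "(\<Sum>q\<in>I. (a q)\<^sup>2) = 1"
  shows "(\<Sum>q\<in>I. (a q * t q)\<^sup>2) \<le> Max ((\<lambda>q. (t q)\<^sup>2) ` I)"
proof -
  define M where "M = Max ((\<lambda>q. (t q)\<^sup>2) ` I)"
  have "(\<Sum>q\<in>I. (a q * t q)\<^sup>2) \<le> (\<Sum>q\<in>I. (a q)\<^sup>2 * M)"
    using I by (intro sum_mono) (auto simp: power_mult_distrib M_def intro: mult_left_mono)
  also have "\<dots> = M" using a by (simp flip: sum_distrib_right)
  finally show ?thesis unfolding M_def .
qed

lemma diag_bilinear_sq_le_Max:
  fixes a b t :: "'i \<Rightarrow> real"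
  assumes I: "finite I" and a: "(\<Sum>q\<in>I. (a q)\<^sup>2) = 1" and b: "(\<Sum>q\<in>I. (b q)\<^sup>2) = 1"
  shows "(\<Sum>q\<in>I. t q * a q * b q)\<^sup>2 \<le> Max ((\<lambda>q. (t q)\<^sup>2) ` I)"
proof -
  define M where "M = Max ((\<lambda>q. (t q)\<^sup>2) ` I)"
  have le_M: "(t q)\<^sup>2 \<le> M" if "q \<in> I" for q using I that by (simp add: M_def)
  obtain q0 where "q0 \<in> I" using a by fastforce
  then have M: "0 \<le> M" using le_M[of q0] by (meson order_trans zero_le_power2)
  have "\<bar>t q * a q * b q\<bar> \<le> sqrt M * (((a q)\<^sup>2 + (b q)\<^sup>2) / 2)" if "q \<in> I" for q
  proof -
    have "\<bar>t q\<bar> \<le> sqrt M" using real_sqrt_le_mono[OF le_M[OF that]] by simp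
    moreover have "\<bar>a q * b q\<bar> \<le> ((a q)\<^sup>2 + (b q)\<^sup>2) / 2"
      using sum_squares_bound[of "\<bar>a q\<bar>" "\<bar>b q\<bar>"] by (simp add: abs_mult)
    ultimately have "\<bar>t q\<bar> * \<bar>a q * b q\<bar> \<le> sqrt M * (((a q)\<^sup>2 + (b q)\<^sup>2) / 2)"
      using M by (intro mult_mono) auto
    then show ?thesis by (simp add: abs_mult mult.assoc)
  qed
  then have "\<bar>\<Sum>q\<in>I. t q * a q * b q\<bar> \<le> (\<Sum>q\<in>I. sqrt M * (((a q)\<^sup>2 + (b q)\<^sup>2) / 2))"
    by (intro order_trans[OF sum_abs] sum_mono)
  also have "\<dots> = sqrt M * (((\<Sum>q\<in>I. (a q)\<^sup>2) + (\<Sum>q\<in>I. (b q)\<^sup>2)) / 2)"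
    by (simp only: sum_distrib_left[symmetric] sum_divide_distrib[symmetric] sum.distrib)
  also have "\<dots> = sqrt M"
    using a b by simp
  finally have "(\<Sum>q\<in>I. t q * a q * b q)\<^sup>2 \<le> (sqrt M)\<^sup>2"
    using M by (subst power2_le_iff_abs_le) auto
  then show ?thesis using M by (simp add: M_def)
qed

lemma Max_image_attained:
  assumes "finite I" "I \<noteq> {}"
  obtains p where "p \<in> I" "f p = Max (f ` I)"
proof -
  have "Max (f ` I) \<in> f ` I" using assms by (intro Max_in) auto
  then obtain p where "p \<in> I" "Max (f ` I) = f p" by blast
  then show thesis by (intro that) simp_all
qed

lemma bilinear_orthogonal_conj_diag:
  fixes A B r :: "'i \<Rightarrow> 'i \<Rightarrow> real"
  assumes r: "\<And>m n. m \<in> I \<Longrightarrow> n \<in> I \<Longrightarrow> r m n = (\<Sum>q\<in>I. A q m * t q * B q n)"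
  shows "(\<Sum>i\<in>I. \<Sum>j\<in>I. k i * l j * r i j)
       = (\<Sum>q\<in>I. t q * (\<Sum>m\<in>I. A q m * k m) * (\<Sum>n\<in>I. B q n * l n))"
proof -
  have "(\<Sum>i\<in>I. \<Sum>j\<in>I. k i * l j * r i j) = (\<Sum>i\<in>I. \<Sum>j\<in>I. \<Sum>q\<in>I. t q * (A q i * k i) * (B q j * l j))"
  proof (intro sum.cong refl)
    fix i j assume "i \<in> I" "j \<in> I"
    then show "k i * l j * r i j = (\<Sum>q\<in>I. t q * (A q i * k i) * (B q j * l j))"
      unfolding r[OF \<open>i \<in> I\<close> \<open>j \<in> I\<close>] sum_distrib_left by (simp add: mult_ac)
  qed
  also have "\<dots> = (\<Sum>i\<in>I. \<Sum>q\<in>I. \<Sum>j\<in>I. t q * (A q i * k i) * (B q j * l j))"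
    by (rule sum.cong[OF refl]) (rule sum.swap)
  also have "\<dots> = (\<Sum>q\<in>I. \<Sum>i\<in>I. \<Sum>j\<in>I. t q * (A q i * k i) * (B q j * l j))"
    by (rule sum.swap)
  also have "\<dots> = (\<Sum>q\<in>I. t q * (\<Sum>m\<in>I. A q m * k m) * (\<Sum>n\<in>I. B q n * l n))"
    by (simp add: sum_distrib_left sum_distrib_right mult_ac)
  finally show ?thesis .
qed

lemma row_norm_orthogonal_conj_diag:
  assumes I: "finite I" and B: "orthogonal_on I B"
    and r: "\<And>m n. m \<in> I \<Longrightarrow> n \<in> I \<Longrightarrow> r m n = (\<Sum>q\<in>I. A q m * t q * B q n)"
  shows "(\<Sum>j\<in>I. (\<Sum>i\<in>I. k i * r i j)\<^sup>2) = (\<Sum>q\<in>I. ((\<Sum>m\<in>I. A q m * k m) * t q)\<^sup>2)"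
proof -
  have "(\<Sum>i\<in>I. k i * r i j) = (\<Sum>q\<in>I. B q j * ((\<Sum>m\<in>I. A q m * k m) * t q))" if "j \<in> I" for j
  proof -
    have "(\<Sum>i\<in>I. k i * r i j) = (\<Sum>i\<in>I. \<Sum>q\<in>I. B q j * (A q i * k i * t q))"
      by (intro sum.cong refl) (simp add: r that sum_distrib_left mult_ac)
    also have "\<dots> = (\<Sum>q\<in>I. B q j * ((\<Sum>m\<in>I. A q m * k m) * t q))"
      by (subst sum.swap) (simp add: sum_distrib_left sum_distrib_right mult_ac)
    finally show ?thesis .
  qed
  then have "(\<Sum>j\<in>I. (\<Sum>i\<in>I. k i * r i j)\<^sup>2) = (\<Sum>j\<in>I. (\<Sum>q\<in>I. B q j * ((\<Sum>m\<in>I. A q m * k m) * t q))\<^sup>2)"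
    by (intro sum.cong refl) simp
  also have "\<dots> = (\<Sum>q\<in>I. ((\<Sum>m\<in>I. A q m * k m) * t q)\<^sup>2)"
    by (rule orthogonal_on_sum_sq_rows[OF I B])
  finally show ?thesis .
qed

lemma orthogonal_on_rows_orthonormal:
  assumes "orthogonal_on I A" "p \<in> I" "q \<in> I"
  shows "(\<Sum>m\<in>I. A q m * A p m) = (if q = p then 1 else 0)"
  using assms by (simp add: orthogonal_on_def)

lemma sum_sq_orthogonal_conj_diag:
  assumes I: "finite I" and A: "orthogonal_on I A" and B: "orthogonal_on I B"
    and r: "\<And>m n. m \<in> I \<Longrightarrow> n \<in> I \<Longrightarrow> r m n = (\<Sum>q\<in>I. A q m * t q * B q n)"
  shows "(\<Sum>m\<in>I. \<Sum>n\<in>I. (r m n)\<^sup>2) = (\<Sum>q\<in>I. (t q)\<^sup>2)"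
proof -
  have "(\<Sum>m\<in>I. \<Sum>n\<in>I. (r m n)\<^sup>2) = (\<Sum>n\<in>I. \<Sum>m\<in>I. (\<Sum>q\<in>I. A q m * (t q * B q n))\<^sup>2)"
    by (subst sum.swap) (intro sum.cong refl, simp add: r mult.assoc)
  also have "\<dots> = (\<Sum>n\<in>I. \<Sum>q\<in>I. (B q n * t q)\<^sup>2)"
    by (rule sum.cong[OF refl]) (simp add: orthogonal_on_sum_sq_rows[OF I A] mult.commute)
  also have "\<dots> = (\<Sum>q\<in>I. (t q)\<^sup>2 * (\<Sum>n\<in>I. B q n * B q n))"
    by (subst sum.swap) (simp add: power_mult_distrib power2_eq_square sum_distrib_left mult_ac)
  also have "\<dots> = (\<Sum>q\<in>I. (t q)\<^sup>2)"
    using B by (intro sum.cong refl) (simp add: orthogonal_on_def)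
  finally show ?thesis .
qed

section \<open>The three discords\<close>

lemma corr_eq_adjoint_conj_diag:
  assumes R: "maximally_mixed_marginals R" and U: "unitary2 U" and V: "unitary2 V"
    and diag: "\<forall>i\<in>{1,2,3}. \<forall>j\<in>{1,2,3}. corr (kron U V * R * dagger (kron U V)) i j
                 = (if i = j then complex_of_real (t i) else 0)"
    and m: "m \<in> {1,2,3}" and n: "n \<in> {1,2,3}"
  shows "Re (corr R m n) = (\<Sum>q\<in>{1,2,3::nat}. adjoint_coef U q m * t q * adjoint_coef V q n)"
proof -
  have D: "(\<Sum>m\<in>{1,2,3::nat}. \<Sum>n\<in>{1,2,3::nat}. adjoint_coef U i m * adjoint_coef V j n * Re (corr R m n))
      = (if i = j then t i else 0)" if ij: "i \<in> {1,2,3}" "j \<in> {1,2,3}" for i j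
  proof -
    define S where "S = (\<Sum>m\<in>{1,2,3::nat}. \<Sum>n\<in>{1,2,3::nat}.
        adjoint_coef U i m * adjoint_coef V j n * Re (corr R m n))"
    have "complex_of_real S = corr (kron U V * R * dagger (kron U V)) i j"
      unfolding S_def by (rule corr_local_unitary[OF R U V ij, symmetric])
    also have "\<dots> = complex_of_real (if i = j then t i else 0)"
      using diag[rule_format, OF ij] by simp
    finally show ?thesis unfolding S_def[symmetric] by (simp only: of_real_eq_iff)
  qed
  show ?thesis
    by (rule orthogonal_conj_diag[OF _ orthogonal_on_adjoint_coef[OF U] orthogonal_on_adjoint_coef[OF V] D m n])
       simp_all
qed

lemma orthogonal_on_row_diag_sum:
  assumes A: "orthogonal_on I A" and B: "orthogonal_on I B" and I: "finite I" and p: "p \<in> I"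
  shows "(\<Sum>q\<in>I. t q * (\<Sum>m\<in>I. A q m * A p m) * (\<Sum>n\<in>I. B q n * B p n)) = t p"
proof -
  have "(\<Sum>q\<in>I. t q * (\<Sum>m\<in>I. A q m * A p m) * (\<Sum>n\<in>I. B q n * B p n)) = (\<Sum>q\<in>I. if q = p then t q else 0)"
    using A B p by (intro sum.cong refl) (simp add: orthogonal_on_rows_orthonormal)
  then show ?thesis using I p by simp
qed

lemma G_eq_orthogonal_conj_diag:
  assumes R: "maximally_mixed_marginals R" and A: "orthogonal_on {1,2,3} A" and B: "orthogonal_on {1,2,3} B"
    and r: "\<And>m n. m \<in> {1,2,3} \<Longrightarrow> n \<in> {1,2,3} \<Longrightarrow> Re (corr R m n) = (\<Sum>q\<in>{1,2,3::nat}. A q m * t q * B q n)"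
  shows "G R = 1/4 * ((\<Sum>q\<in>{1,2,3::nat}. (t q)\<^sup>2) - Max ((\<lambda>q. (t q)\<^sup>2) ` {1,2,3::nat}))"
proof -
  have fin: "finite {1,2,3::nat}" by simp
  have normA: "(\<Sum>q\<in>{1,2,3::nat}. (\<Sum>m\<in>{1,2,3::nat}. A q m * k m)\<^sup>2) = 1" if "unit3 k" for k
    using that by (simp only: orthogonal_on_sum_sq_cols[OF fin A] unit3_iff_sum)
  have normB: "(\<Sum>q\<in>{1,2,3::nat}. (\<Sum>m\<in>{1,2,3::nat}. B q m * l m)\<^sup>2) = 1" if "unit3 l" for l
    using that by (simp only: orthogonal_on_sum_sq_cols[OF fin B] unit3_iff_sum)
  define M where "M = Max ((\<lambda>q. (t q)\<^sup>2) ` {1,2,3::nat})"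
  have dist: "(HS_dist R (chi R k l))\<^sup>2 = 1/4 * ((\<Sum>q\<in>{1,2,3::nat}. (t q)\<^sup>2)
      - (\<Sum>q\<in>{1,2,3::nat}. t q * (\<Sum>m\<in>{1,2,3::nat}. A q m * k m) * (\<Sum>n\<in>{1,2,3::nat}. B q n * l n))\<^sup>2)"
    if "unit3 k" "unit3 l" for k l
    by (simp only: HS_dist_chi[OF R that] bilinear_orthogonal_conj_diag[OF r]
        sum_sq_orthogonal_conj_diag[OF fin A B r])
  obtain p where p: "p \<in> {1,2,3}" "(t p)\<^sup>2 = M"
    using Max_image_attained[of "{1,2,3::nat}" "\<lambda>q. (t q)\<^sup>2"] unfolding M_def by auto
  have unit_rows: "unit3 (A p)" "unit3 (B p)"
    using orthogonal_on_rows_orthonormal[OF A p(1) p(1)] orthogonal_on_rows_orthonormal[OF B p(1) p(1)]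
    by (simp_all add: unit3_iff_sum power2_eq_square)
  show ?thesis unfolding G_def M_def[symmetric]
  proof (rule cInf_eq_minimum)
    have "(HS_dist R (chi R (A p) (B p)))\<^sup>2 = 1/4 * ((\<Sum>q\<in>{1,2,3::nat}. (t q)\<^sup>2) - M)"
      unfolding dist[OF unit_rows] orthogonal_on_row_diag_sum[OF A B fin p(1)] using p by simp
    then show "1/4 * ((\<Sum>q\<in>{1,2,3::nat}. (t q)\<^sup>2) - M) \<in> {(HS_dist R (chi R k l))\<^sup>2 | k l. unit3 k \<and> unit3 l}"
      using unit_rows by force
  next
    fix x assume "x \<in> {(HS_dist R (chi R k l))\<^sup>2 | k l. unit3 k \<and> unit3 l}"
    then obtain k l where kl: "unit3 k" "unit3 l" and x: "x = (HS_dist R (chi R k l))\<^sup>2" by blast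
    have "(\<Sum>q\<in>{1,2,3::nat}. t q * (\<Sum>m\<in>{1,2,3::nat}. A q m * k m) * (\<Sum>n\<in>{1,2,3::nat}. B q n * l n))\<^sup>2 \<le> M"
      unfolding M_def by (rule diag_bilinear_sq_le_Max[OF fin normA[OF kl(1)] normB[OF kl(2)]])
    then show "1/4 * ((\<Sum>q\<in>{1,2,3::nat}. (t q)\<^sup>2) - M) \<le> x"
      unfolding x dist[OF kl] by simp
  qed
qed

lemma G_right_eq_orthogonal_conj_diag:
  assumes R: "maximally_mixed_marginals R" and A: "orthogonal_on {1,2,3} A" and B: "orthogonal_on {1,2,3} B"
    and r: "\<And>m n. m \<in> {1,2,3} \<Longrightarrow> n \<in> {1,2,3} \<Longrightarrow> Re (corr R m n) = (\<Sum>q\<in>{1,2,3::nat}. A q m * t q * B q n)"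
  shows "G_right R = 1/4 * ((\<Sum>q\<in>{1,2,3::nat}. (t q)\<^sup>2) - Max ((\<lambda>q. (t q)\<^sup>2) ` {1,2,3::nat}))"
proof -
  have fin: "finite {1,2,3::nat}" by simp
  have normA: "(\<Sum>q\<in>{1,2,3::nat}. (\<Sum>m\<in>{1,2,3::nat}. A q m * k m)\<^sup>2) = 1" if "unit3 k" for k
    using that by (simp only: orthogonal_on_sum_sq_cols[OF fin A] unit3_iff_sum)
  define M where "M = Max ((\<lambda>q. (t q)\<^sup>2) ` {1,2,3::nat})"
  have dist: "(HS_dist R (rho_right R k))\<^sup>2 = 1/4 * ((\<Sum>q\<in>{1,2,3::nat}. (t q)\<^sup>2)
      - (\<Sum>q\<in>{1,2,3::nat}. ((\<Sum>m\<in>{1,2,3::nat}. A q m * k m) * t q)\<^sup>2))"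
    if "unit3 k" for k
    by (simp only: HS_dist_rho_right[OF R that] row_norm_orthogonal_conj_diag[OF fin B r]
        sum_sq_orthogonal_conj_diag[OF fin A B r])
  obtain p where p: "p \<in> {1,2,3}" "(t p)\<^sup>2 = M"
    using Max_image_attained[of "{1,2,3::nat}" "\<lambda>q. (t q)\<^sup>2"] unfolding M_def by auto
  have unit_row: "unit3 (A p)"
    using orthogonal_on_rows_orthonormal[OF A p(1) p(1)] by (simp add: unit3_iff_sum power2_eq_square)
  show ?thesis unfolding G_right_def M_def[symmetric]
  proof (rule cInf_eq_minimum)
    have "(\<Sum>q\<in>{1,2,3::nat}. ((\<Sum>m\<in>{1,2,3::nat}. A q m * A p m) * t q)\<^sup>2)
        = (\<Sum>q\<in>{1,2,3::nat}. (t q)\<^sup>2 * (\<Sum>m\<in>{1,2,3::nat}. A q m * A p m) * (\<Sum>n\<in>{1,2,3::nat}. A q n * A p n))"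
      by (intro sum.cong refl) (simp add: power2_eq_square)
    also have "\<dots> = M"
      using p by (simp only: orthogonal_on_row_diag_sum[OF A A fin p(1)])
    finally have "(HS_dist R (rho_right R (A p)))\<^sup>2 = 1/4 * ((\<Sum>q\<in>{1,2,3::nat}. (t q)\<^sup>2) - M)"
      unfolding dist[OF unit_row] by simp
    then show "1/4 * ((\<Sum>q\<in>{1,2,3::nat}. (t q)\<^sup>2) - M) \<in> {(HS_dist R (rho_right R k))\<^sup>2 | k. unit3 k}"
      using unit_row by force
  next
    fix x assume "x \<in> {(HS_dist R (rho_right R k))\<^sup>2 | k. unit3 k}"
    then obtain k where k: "unit3 k" and x: "x = (HS_dist R (rho_right R k))\<^sup>2" by blast
    have "(\<Sum>q\<in>{1,2,3::nat}. ((\<Sum>m\<in>{1,2,3::nat}. A q m * k m) * t q)\<^sup>2) \<le> M"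
      unfolding M_def by (rule weighted_sum_sq_le_Max[OF fin normA[OF k]])
    then show "1/4 * ((\<Sum>q\<in>{1,2,3::nat}. (t q)\<^sup>2) - M) \<le> x"
      unfolding x dist[OF k] by simp
  qed
qed

text \<open>The left discord is the right one for the transposed correlation block, with the roles of
  \<open>A\<close> and \<open>B\<close> exchanged.\<close>

lemma G_left_eq_orthogonal_conj_diag:
  assumes R: "maximally_mixed_marginals R" and A: "orthogonal_on {1,2,3} A" and B: "orthogonal_on {1,2,3} B"
    and r: "\<And>m n. m \<in> {1,2,3} \<Longrightarrow> n \<in> {1,2,3} \<Longrightarrow> Re (corr R m n) = (\<Sum>q\<in>{1,2,3::nat}. A q m * t q * B q n)"
  shows "G_left R = 1/4 * ((\<Sum>q\<in>{1,2,3::nat}. (t q)\<^sup>2) - Max ((\<lambda>q. (t q)\<^sup>2) ` {1,2,3::nat}))"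
proof -
  have fin: "finite {1,2,3::nat}" by simp
  have normB: "(\<Sum>q\<in>{1,2,3::nat}. (\<Sum>m\<in>{1,2,3::nat}. B q m * l m)\<^sup>2) = 1" if "unit3 l" for l
    using that by (simp only: orthogonal_on_sum_sq_cols[OF fin B] unit3_iff_sum)
  define M where "M = Max ((\<lambda>q. (t q)\<^sup>2) ` {1,2,3::nat})"
  have r': "Re (corr R n m) = (\<Sum>q\<in>{1,2,3::nat}. B q m * t q * A q n)"
    if "m \<in> {1,2,3}" "n \<in> {1,2,3}" for m n
    using r[OF that(2,1)] by (simp add: mult_ac)
  have dist: "(HS_dist R (rho_left R l))\<^sup>2 = 1/4 * ((\<Sum>q\<in>{1,2,3::nat}. (t q)\<^sup>2)
      - (\<Sum>q\<in>{1,2,3::nat}. ((\<Sum>m\<in>{1,2,3::nat}. B q m * l m) * t q)\<^sup>2))"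
    if "unit3 l" for l
    by (simp only: HS_dist_rho_left[OF R that] row_norm_orthogonal_conj_diag[OF fin A r']
        sum_sq_orthogonal_conj_diag[OF fin A B r])
  obtain p where p: "p \<in> {1,2,3}" "(t p)\<^sup>2 = M"
    using Max_image_attained[of "{1,2,3::nat}" "\<lambda>q. (t q)\<^sup>2"] unfolding M_def by auto
  have unit_row: "unit3 (B p)"
    using orthogonal_on_rows_orthonormal[OF B p(1) p(1)] by (simp add: unit3_iff_sum power2_eq_square)
  show ?thesis unfolding G_left_def M_def[symmetric]
  proof (rule cInf_eq_minimum)
    have "(\<Sum>q\<in>{1,2,3::nat}. ((\<Sum>m\<in>{1,2,3::nat}. B q m * B p m) * t q)\<^sup>2)
        = (\<Sum>q\<in>{1,2,3::nat}. (t q)\<^sup>2 * (\<Sum>m\<in>{1,2,3::nat}. B q m * B p m) * (\<Sum>n\<in>{1,2,3::nat}. B q n * B p n))"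
      by (intro sum.cong refl) (simp add: power2_eq_square)
    also have "\<dots> = M"
      using p by (simp only: orthogonal_on_row_diag_sum[OF B B fin p(1)])
    finally have "(HS_dist R (rho_left R (B p)))\<^sup>2 = 1/4 * ((\<Sum>q\<in>{1,2,3::nat}. (t q)\<^sup>2) - M)"
      unfolding dist[OF unit_row] by simp
    then show "1/4 * ((\<Sum>q\<in>{1,2,3::nat}. (t q)\<^sup>2) - M) \<in> {(HS_dist R (rho_left R l))\<^sup>2 | l. unit3 l}"
      using unit_row by force
  next
    fix x assume "x \<in> {(HS_dist R (rho_left R l))\<^sup>2 | l. unit3 l}"
    then obtain l where l: "unit3 l" and x: "x = (HS_dist R (rho_left R l))\<^sup>2" by blast
    have "(\<Sum>q\<in>{1,2,3::nat}. ((\<Sum>m\<in>{1,2,3::nat}. B q m * l m) * t q)\<^sup>2) \<le> M"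
      unfolding M_def by (rule weighted_sum_sq_le_Max[OF fin normB[OF l]])
    then show "1/4 * ((\<Sum>q\<in>{1,2,3::nat}. (t q)\<^sup>2) - M) \<le> x"
      unfolding x dist[OF l] by simp
  qed
qed

lemma density4_maximally_mixed_marginals:
  assumes "density4 \<rho>"
    and "\<forall>i\<in>{1,2,3}. mtrace (\<rho> * kron (pauli i) (1\<^sub>m 2)) = 0"
    and "\<forall>i\<in>{1,2,3}. mtrace (\<rho> * kron (1\<^sub>m 2) (pauli i)) = 0"
  shows "maximally_mixed_marginals \<rho>"
proof -
  have "\<rho> \<in> carrier_mat 4 4" "dagger \<rho> = \<rho>" "mtrace \<rho> = 1"
    using assms(1) by (auto simp: density4_def)
  then show ?thesis
    using assms(2,3) by (simp add: maximally_mixed_marginals_def corr_def pauli_zero kron_one_2)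
qed

theorem mainTheorem2:
  fixes \<rho> U V :: "complex mat" and t :: "nat \<Rightarrow> real"
  assumes "density4 \<rho>"
    and "\<forall>i\<in>{1,2,3}. mtrace (\<rho> * kron (pauli i) (1\<^sub>m 2)) = 0"
    and "\<forall>i\<in>{1,2,3}. mtrace (\<rho> * kron (1\<^sub>m 2) (pauli i)) = 0"
    and "unitary2 U" and "unitary2 V"
    and "\<forall>i\<in>{1,2,3}. \<forall>j\<in>{1,2,3}.
           corr (kron U V * \<rho> * dagger (kron U V)) i j
             = (if i = j then complex_of_real (t i) else 0)"
  shows "G \<rho> = (1/4) * ((t 1)\<^sup>2 + (t 2)\<^sup>2 + (t 3)\<^sup>2 - Max {(t 1)\<^sup>2, (t 2)\<^sup>2, (t 3)\<^sup>2})
         \<and> G \<rho> = G_right \<rho> \<and> G \<rho> = G_left \<rho>"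
proof -
  have R: "maximally_mixed_marginals \<rho>"
    using density4_maximally_mixed_marginals assms(1-3) by blast
  note A = orthogonal_on_adjoint_coef[OF assms(4)] and B = orthogonal_on_adjoint_coef[OF assms(5)]
  note r = corr_eq_adjoint_conj_diag[OF R assms(4,5,6)]
  show ?thesis
    using G_eq_orthogonal_conj_diag[OF R A B r] G_right_eq_orthogonal_conj_diag[OF R A B r]
      G_left_eq_orthogonal_conj_diag[OF R A B r]
    by (simp add: add.assoc)
qed

end
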